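(* Let $\alpha>1$, $f\in SR_\alpha$, $b<\alpha$ and $k\in SR_b$. (i) There is $r_o>0$ such that for every $\Lambda>r_o$ the equation \[ g(\Lambda)f'(g(\Lambda))-f(g(\Lambda))+k(g(\Lambda))=\ln\Lambda \] has a unique solution $g\in SR_0$. Moreover, the function $h:(\ln r_o,\infty)\to\mathbb{R}$, $h(\Lambda)=g(\exp(\Lambda))$, belongs to $SR_{1/\alpha}$. (ii) For each $\gamma>0$ and $\delta>0$ there is $z>r_o$ such that for every $\Lambda>z$ and every $y\in[(\ln\Lambda)^{-\gamma},(\ln\Lambda)^{\gamma}]$, \[ \Big|g(\Lambda)\big[f'(g(y\Lambda))-f'(g(\Lambda))\big]-\ln y\Big|\le\delta|\ln y|. \] (iii) $\displaystyle\lim_{\Lambda\to\infty}\frac{g'(\Lambda)\Lambda\ln\Lambda}{g(\Lambda)}=\frac1\alpha$, $\displaystyle\lim_{\Lambda\to\infty}\frac{f(g(\Lambda))}{\ln\Lambda}=\frac1{\alpha-1}$, $\displaystyle\lim_{\Lambda\to\infty}\frac{g(\Lambda)f'(g(\Lambda))}{\ln\Lambda}=\frac{\alpha}{\alpha-1}$, and $\displaystyle\lim_{\Lambda\to\infty}\frac{g(\Lambda)f'(g(\Lambda))-f(g(\Lambda))}{\ln\Lambda}=1$. (iv) Let $k_0,k_1\in SR_b$ be such that $c:=\lim_{\Lambda\to\infty}(k_1(\Lambda)-k_0(\Lambda))\in\mathbb{R}$, and for $i\in\{0,1\}$ let $g_i$ be the unique solution of $g_i(\Lambda)f'(g_i(\Lambda))-f(g_i(\Lambda))+k_i(g_i(\Lambda))=\ln\Lambda$.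 Then for $i\in\{0,1\}$, \[ \lim_{\Lambda\to\infty}g_i(\Lambda)\big(f'(g_0(\Lambda))-f'(g_1(\Lambda))\big)=c. \]
   Context: A function $f:(z,\infty)\to\mathbb{R}$ is in $SR_\alpha$ (smoothly regularly varying with index $\alpha$) if $f$ is $C^\infty$, $z_o:=\max\{1,\sup\{\Lambda\ge z:f(\Lambda)\le0\}\}<\infty$, and $h(u):=\ln f(e^u)$ on $(\ln z_o,\infty)$ satisfies $h'(u)\to\alpha$ and $h^{(m)}(u)\to0$ for $m\ge2$ as $u\to\infty$. *)

theory Defs
  imports "HOL-Analysis.Analysis"
begin

definition smooth_on_set :: "real set \<Rightarrow> (real \<Rightarrow> real) \<Rightarrow> bool" where
  "smooth_on_set S f \<longleftrightarrow> (\<forall>m::nat. \<forall>x\<in>S. (deriv ^^ m) f differentiable (at x))"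

text \<open>The function is
  given on some interval (z, infinity); z_o < infinity means f is positive on a tail
  (beyond some z_o with z_o at least 1 and at least z); h u = ln (f (exp u)).\<close>
definition SR :: "real \<Rightarrow> (real \<Rightarrow> real) \<Rightarrow> bool" where
  "SR \<alpha> f \<longleftrightarrow> (\<exists>z zo. smooth_on_set {z<..} f \<and> zo \<ge> 1 \<and> zo \<ge> z \<and>
      (\<forall>x>zo. f x > 0) \<and>
      (let h = (\<lambda>u. ln (f (exp u))) in
        (deriv h \<longlongrightarrow> \<alpha>) at_top \<and>
        (\<forall>m::nat. m \<ge> 2 \<longrightarrow> ((deriv ^^ m) h \<longlongrightarrow> 0) at_top)))"

definition sol_eq :: "(real \<Rightarrow> real) \<Rightarrow> (real \<Rightarrow> real) \<Rightarrow> real \<Rightarrow> real \<Rightarrow> bool" where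
  "sol_eq f k \<Lambda> x \<longleftrightarrow> x * deriv f x - f x + k x = ln \<Lambda>"

definition is_sol :: "(real \<Rightarrow> real) \<Rightarrow> (real \<Rightarrow> real) \<Rightarrow> real \<Rightarrow> real \<Rightarrow> (real \<Rightarrow> real) \<Rightarrow> bool" where
  "is_sol f k r xo g \<longleftrightarrow> (\<forall>\<Lambda>>r. g \<Lambda> > xo \<and> sol_eq f k \<Lambda> (g \<Lambda>) \<and>
      (\<forall>x>xo. sol_eq f k \<Lambda> x \<longrightarrow> x = g \<Lambda>))"

end

theory Submission
  imports Defs
begin

text \<open>Write x = exp s, f x = exp (F s) and k x = exp (K s). The equation becomes Q s = ln \<Lambda>
  with Q = exp F * (F' - 1) + exp K. Since F' tends to \<alpha> > max 1 b while all higher derivatives of F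
  and K vanish at infinity, the term exp K is negligible and Psi = ln Q has the same properties as F:
  Psi' tends to \<alpha> and the higher derivatives vanish. Hence Psi is eventually a smooth increasing
  bijection onto a half line, the solution is g \<Lambda> = exp (H (ln (ln \<Lambda>))) for its inverse H, and
  H' = 1 / Psi' \<circ> H tends to 1 / \<alpha> with vanishing higher derivatives; this gives (i) and (iii).
  For (ii) and (iv), Cauchy's mean value theorem for P s = f' (exp s) and Q shows that
  exp s * (P s' - P s) is asymptotically Q s' - Q s when s' - s is small, and Q s' - Q s is ln y,
  respectively tends to c.\<close>

subsection \<open>Smoothness on an open set\<close>

lemmas DERIV_deriv = DERIV_deriv_iff_real_differentiable[THEN iffD2]

lemma DERIV_imp_real_differentiable: "(u has_real_derivative D) (at x) \<Longrightarrow> u differentiable (at x)"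
  unfolding real_differentiable_def by blast

lemma higher_deriv_cong_open:
  assumes "open S" "x \<in> S" "\<And>y. y \<in> S \<Longrightarrow> u y = v y"
  shows "(deriv ^^ j) u x = (deriv ^^ j) v x"
proof -
  have "eventually (\<lambda>y. u y = v y) (nhds x)"
    using assms unfolding eventually_nhds by blast
  then show ?thesis by (rule higher_deriv_cong_ev) simp
qed

lemma differentiable_cong_open:
  fixes u v :: "real \<Rightarrow> real"
  assumes "open S" "x \<in> S" "\<And>y. y \<in> S \<Longrightarrow> u y = v y" "u differentiable (at x)"
  shows "v differentiable (at x)"
  using has_field_derivative_transform_within_open[OF DERIV_deriv[OF assms(4)] assms(1,2)] assms(3)
  by (auto intro: DERIV_imp_real_differentiable)

definition differentiable_upto :: "nat \<Rightarrow> real set \<Rightarrow> (real \<Rightarrow> real) \<Rightarrow> bool" where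
  "differentiable_upto m S u \<longleftrightarrow> (\<forall>j\<le>m. \<forall>x\<in>S. (deriv ^^ j) u differentiable (at x))"

lemma differentiable_upto_0 [simp]: "differentiable_upto 0 S u \<longleftrightarrow> (\<forall>x\<in>S. u differentiable (at x))"
  unfolding differentiable_upto_def by auto

lemma differentiable_upto_Suc:
  "differentiable_upto (Suc m) S u \<longleftrightarrow> (\<forall>x\<in>S. u differentiable (at x)) \<and> differentiable_upto m S (deriv u)"
proof -
  have "(\<forall>j\<le>Suc m. P j) \<longleftrightarrow> P 0 \<and> (\<forall>j\<le>m. P (Suc j))" for P :: "nat \<Rightarrow> bool"
    by (metis Suc_le_mono le0 not0_implies_Suc)
  then show ?thesis
    unfolding differentiable_upto_def by (simp add: funpow_Suc_right del: funpow.simps)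
qed

lemma differentiable_upto_SucD: "differentiable_upto (Suc m) S u \<Longrightarrow> differentiable_upto m S u"
  unfolding differentiable_upto_def by auto

lemma smooth_on_set_iff_differentiable_upto: "smooth_on_set S u \<longleftrightarrow> (\<forall>m. differentiable_upto m S u)"
  unfolding smooth_on_set_def differentiable_upto_def by blast

lemma differentiable_upto_cong:
  assumes "open S" "\<And>y. y \<in> S \<Longrightarrow> u y = v y" "differentiable_upto m S u"
  shows "differentiable_upto m S v"
  unfolding differentiable_upto_def
proof (intro allI impI ballI)
  fix j x assume "j \<le> m" "x \<in> S"
  moreover have "\<And>y. y \<in> S \<Longrightarrow> (deriv ^^ j) u y = (deriv ^^ j) v y"
    using higher_deriv_cong_open[of S _ u v j] assms by blast
  ultimately show "(deriv ^^ j) v differentiable (at x)"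
    using assms(3) differentiable_cong_open[OF assms(1)] unfolding differentiable_upto_def by blast
qed

lemma differentiable_upto_SucI:
  assumes "open S" "\<And>x. x \<in> S \<Longrightarrow> (u has_real_derivative u' x) (at x)" "differentiable_upto m S u'"
  shows "differentiable_upto (Suc m) S u"
  unfolding differentiable_upto_Suc
proof
  show "\<forall>x\<in>S. u differentiable (at x)" using assms(2) DERIV_imp_real_differentiable by blast
  show "differentiable_upto m S (deriv u)"
    by (rule differentiable_upto_cong[OF assms(1) _ assms(3)]) (metis DERIV_imp_deriv assms(2))
qed

lemma differentiable_upto_const: "differentiable_upto m S (\<lambda>x. c)"
  by (induction m arbitrary: c) (simp_all add: differentiable_upto_Suc)

lemma differentiable_upto_add:
  assumes "open S" "differentiable_upto m S u" "differentiable_upto m S v"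
  shows "differentiable_upto m S (\<lambda>x. u x + v x)"
  using assms(2,3)
proof (induction m arbitrary: u v)
  case (Suc m)
  then show ?case
    by (intro differentiable_upto_SucI[OF assms(1), where u' = "\<lambda>x. deriv u x + deriv v x"])
       (auto simp: differentiable_upto_Suc intro!: DERIV_add DERIV_deriv)
qed simp

lemma differentiable_upto_mult:
  assumes "open S" "differentiable_upto m S u" "differentiable_upto m S v"
  shows "differentiable_upto m S (\<lambda>x. u x * v x)"
  using assms(2,3)
proof (induction m arbitrary: u v)
  case (Suc m)
  have "differentiable_upto m S (\<lambda>x. deriv u x * v x + deriv v x * u x)"
    using Suc.prems differentiable_upto_SucD[OF Suc.prems(1)] differentiable_upto_SucD[OF Suc.prems(2)]
    by (intro differentiable_upto_add[OF assms(1)] Suc.IH) (auto simp: differentiable_upto_Suc)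
  then show ?case
    using Suc.prems by (intro differentiable_upto_SucI[OF assms(1)])
      (auto simp: differentiable_upto_Suc intro!: DERIV_mult DERIV_deriv)
qed simp

lemma smooth_on_set_deriv: "smooth_on_set S u \<Longrightarrow> smooth_on_set S (deriv u)"
  unfolding smooth_on_set_iff_differentiable_upto by (metis differentiable_upto_Suc)

lemma smooth_on_set_imp_differentiable: "smooth_on_set S u \<Longrightarrow> x \<in> S \<Longrightarrow> u differentiable (at x)"
  unfolding smooth_on_set_def by (metis funpow_0)

lemma differentiable_upto_compose:
  assumes "open S" "differentiable_upto m S G" "\<And>x. x \<in> S \<Longrightarrow> G x \<in> U" "smooth_on_set U F"
  shows "differentiable_upto m S (\<lambda>x. F (G x))"
  using assms(2,4)
proof (induction m arbitrary: F)
  case 0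
  have "(\<lambda>x. F (G x)) differentiable (at x)" if "x \<in> S" for x
    using differentiable_chain_at[of G x F] 0 assms(3)[OF that] smooth_on_set_imp_differentiable that
    unfolding o_def by auto
  then show ?case by simp
next
  case (Suc m)
  have G: "\<And>x. x \<in> S \<Longrightarrow> G differentiable (at x)" "differentiable_upto m S (deriv G)"
    using Suc.prems(1) unfolding differentiable_upto_Suc by auto
  have F: "\<And>y. y \<in> U \<Longrightarrow> F differentiable (at y)" "smooth_on_set U (deriv F)"
    using Suc.prems(2) smooth_on_set_imp_differentiable smooth_on_set_deriv by auto
  have "differentiable_upto m S (\<lambda>x. deriv F (G x) * deriv G x)"
    by (rule differentiable_upto_mult[OF assms(1) Suc.IH[OF differentiable_upto_SucD[OF Suc.prems(1)] F(2)] G(2)])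
  moreover have "((\<lambda>x. F (G x)) has_real_derivative deriv F (G x) * deriv G x) (at x)" if "x \<in> S" for x
    using DERIV_chain2[OF DERIV_deriv[OF F(1)] DERIV_deriv[OF G(1)]] assms(3) that by blast
  ultimately show ?case by (rule differentiable_upto_SucI[OF assms(1), rotated])
qed

lemma smooth_on_set_subset: "smooth_on_set S u \<Longrightarrow> T \<subseteq> S \<Longrightarrow> smooth_on_set T u"
  unfolding smooth_on_set_def by blast

lemma smooth_on_set_cong:
  "open S \<Longrightarrow> (\<And>y. y \<in> S \<Longrightarrow> u y = v y) \<Longrightarrow> smooth_on_set S u \<Longrightarrow> smooth_on_set S v"
  unfolding smooth_on_set_iff_differentiable_upto by (metis differentiable_upto_cong)

lemma smooth_on_set_const: "smooth_on_set S (\<lambda>x. c)"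
  unfolding smooth_on_set_iff_differentiable_upto by (simp add: differentiable_upto_const)

lemma smooth_on_set_add:
  "open S \<Longrightarrow> smooth_on_set S u \<Longrightarrow> smooth_on_set S v \<Longrightarrow> smooth_on_set S (\<lambda>x. u x + v x)"
  unfolding smooth_on_set_iff_differentiable_upto by (simp add: differentiable_upto_add)

lemma smooth_on_set_mult:
  "open S \<Longrightarrow> smooth_on_set S u \<Longrightarrow> smooth_on_set S v \<Longrightarrow> smooth_on_set S (\<lambda>x. u x * v x)"
  unfolding smooth_on_set_iff_differentiable_upto by (simp add: differentiable_upto_mult)

lemma smooth_on_set_compose:
  assumes "open S" "smooth_on_set S G" "\<And>x. x \<in> S \<Longrightarrow> G x \<in> U" "smooth_on_set U F"
  shows "smooth_on_set S (\<lambda>x. F (G x))"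
  using assms differentiable_upto_compose unfolding smooth_on_set_iff_differentiable_upto by blast

lemma smooth_on_set_ident:
  assumes "open S" shows "smooth_on_set S (\<lambda>x. x)"
proof -
  have "differentiable_upto m S (\<lambda>x. x)" for m
    by (cases m) (auto intro!: differentiable_upto_SucI[OF assms, where u' = "\<lambda>x. 1"]
        differentiable_upto_const DERIV_imp_real_differentiable[OF DERIV_ident])
  then show ?thesis unfolding smooth_on_set_iff_differentiable_upto by blast
qed

lemma smooth_on_set_exp: "smooth_on_set S exp"
proof -
  have "differentiable_upto m UNIV exp" for m
    by (induction m) (auto intro: differentiable_upto_SucI DERIV_imp_real_differentiable DERIV_exp)
  then show ?thesis unfolding smooth_on_set_iff_differentiable_upto differentiable_upto_def by blast
qed

lemma smooth_on_set_inverse: "smooth_on_set {0<..} (inverse :: real \<Rightarrow> real)"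
proof -
  have "differentiable_upto m {0<..} (inverse :: real \<Rightarrow> real)" for m
  proof (induction m)
    case (Suc m)
    have "differentiable_upto m {0<..} (\<lambda>x. - (inverse x * inverse (x::real)))"
      using differentiable_upto_mult[OF _ differentiable_upto_const[of m _ "-1"]
          differentiable_upto_mult[OF _ Suc Suc]]
      by simp
    then show ?case
      by (rule differentiable_upto_SucI[rotated 2]) (auto intro!: derivative_eq_intros simp: power2_eq_square)
  qed (auto intro: DERIV_imp_real_differentiable DERIV_inverse)
  then show ?thesis unfolding smooth_on_set_iff_differentiable_upto by blast
qed

lemma smooth_on_set_ln: "smooth_on_set {0<..} (ln :: real \<Rightarrow> real)"
  unfolding smooth_on_set_iff_differentiable_upto
proof
  fix m
  show "differentiable_upto m {0<..} ln"
  proof (cases m)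
    case (Suc n)
    show ?thesis unfolding Suc
      by (rule differentiable_upto_SucI[where u' = inverse])
        (use smooth_on_set_inverse in \<open>auto simp: smooth_on_set_iff_differentiable_upto
          divide_inverse intro!: derivative_eq_intros\<close>)
  qed (auto intro: DERIV_imp_real_differentiable DERIV_ln)
qed

lemma smooth_on_set_inverse_function:
  assumes "open S" "open U" "\<And>w. w \<in> S \<Longrightarrow> H w \<in> U"
    "\<And>w. w \<in> S \<Longrightarrow> (H has_real_derivative inverse (deriv \<Psi> (H w))) (at w)"
    "smooth_on_set U \<Psi>" "\<And>s. s \<in> U \<Longrightarrow> deriv \<Psi> s > 0"
  shows "smooth_on_set S H"
proof -
  have "differentiable_upto m S (\<lambda>w. G (H w))" if "smooth_on_set U G" for m G
    using that
  proof (induction m arbitrary: G)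
    case 0
    have "(\<lambda>w. G (H w)) differentiable (at w)" if "w \<in> S" for w
      using DERIV_chain2[OF DERIV_deriv assms(4)[OF that]] smooth_on_set_imp_differentiable[OF 0 assms(3)[OF that]]
      by (blast intro: DERIV_imp_real_differentiable)
    then show ?case by simp
  next
    case (Suc m)
    have \<phi>: "smooth_on_set U (\<lambda>s. deriv G s * inverse (deriv \<Psi> s))"
      using assms(6) by (intro smooth_on_set_mult[OF assms(2)] smooth_on_set_deriv Suc.prems
          smooth_on_set_compose[OF assms(2) _ _ smooth_on_set_inverse] assms(5)) auto
    moreover have "((\<lambda>w. G (H w)) has_real_derivative deriv G (H w) * inverse (deriv \<Psi> (H w))) (at w)"
      if "w \<in> S" for w
      using that assms(3,4) Suc.prems
      by (intro DERIV_chain2[OF DERIV_deriv]) (auto intro: smooth_on_set_imp_differentiable)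
    ultimately show ?case
      by (intro differentiable_upto_SucI[OF assms(1) _ Suc.IH[OF \<phi>]])
  qed
  from this[OF smooth_on_set_ident[OF assms(2)]] show ?thesis
    unfolding smooth_on_set_iff_differentiable_upto by simp
qed

subsection \<open>Behaviour at infinity\<close>

definition smooth_at_top :: "(real \<Rightarrow> real) \<Rightarrow> bool" where
  "smooth_at_top u \<longleftrightarrow> (\<forall>\<^sub>F a in at_top. smooth_on_set {a<..} u)"

lemma smooth_at_topI: "smooth_on_set {a<..} u \<Longrightarrow> smooth_at_top u"
  unfolding smooth_at_top_def using eventually_ge_at_top[of a]
  by eventually_elim (auto elim: smooth_on_set_subset)

lemma smooth_at_top_eventually_differentiable:
  assumes "smooth_at_top u" shows "\<forall>\<^sub>F x in at_top. u differentiable (at x)"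
proof -
  obtain a where a: "smooth_on_set {a<..} u"
    using assms unfolding smooth_at_top_def eventually_at_top_linorder by auto
  show ?thesis
    using eventually_gt_at_top[of a] by eventually_elim (auto intro: smooth_on_set_imp_differentiable[OF a])
qed

lemma smooth_at_top_deriv: "smooth_at_top u \<Longrightarrow> smooth_at_top (deriv u)"
  unfolding smooth_at_top_def by (auto elim: eventually_mono intro: smooth_on_set_deriv)

lemma smooth_at_top_const: "smooth_at_top (\<lambda>x. c)"
  by (rule smooth_at_topI[OF smooth_on_set_const])

lemma smooth_at_top_add:
  assumes "smooth_at_top u" "smooth_at_top v" shows "smooth_at_top (\<lambda>x. u x + v x)"
  using assms unfolding smooth_at_top_def by eventually_elim (simp add: smooth_on_set_add)

lemma smooth_at_top_mult:
  assumes "smooth_at_top u" "smooth_at_top v" shows "smooth_at_top (\<lambda>x. u x * v x)"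
  using assms unfolding smooth_at_top_def by eventually_elim (simp add: smooth_on_set_mult)

lemma smooth_at_top_diff:
  assumes "smooth_at_top u" "smooth_at_top v" shows "smooth_at_top (\<lambda>x. u x - v x)"
  using smooth_at_top_add[OF assms(1) smooth_at_top_mult[OF smooth_at_top_const assms(2)], of "-1"]
  by simp

lemma smooth_at_top_cong:
  assumes "smooth_at_top u" "\<forall>\<^sub>F x in at_top. u x = v x" shows "smooth_at_top v"
  using assms(1) eventually_all_ge_at_top[OF assms(2)] unfolding smooth_at_top_def
  by eventually_elim (rule smooth_on_set_cong[OF open_greaterThan], auto)

lemma smooth_at_top_compose:
  assumes "smooth_at_top G" "open U" "smooth_on_set U F" "\<forall>\<^sub>F x in at_top. G x \<in> U"
  shows "smooth_at_top (\<lambda>x. F (G x))"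
  using assms(1) eventually_all_ge_at_top[OF assms(4)] unfolding smooth_at_top_def
  by eventually_elim (auto intro: smooth_on_set_compose[OF _ _ _ assms(3)])

lemma smooth_at_top_compose_at_top:
  assumes "smooth_at_top q" "filterlim G at_top at_top" "smooth_at_top G"
  shows "smooth_at_top (\<lambda>x. q (G x))"
proof -
  obtain a where "smooth_on_set {a<..} q"
    using assms(1) unfolding smooth_at_top_def eventually_at_top_linorder by auto
  then show ?thesis
    using assms(2) by (intro smooth_at_top_compose[OF assms(3)]) (auto simp: filterlim_at_top_dense)
qed

lemma smooth_at_top_exp: "smooth_at_top D \<Longrightarrow> smooth_at_top (\<lambda>x. exp (D x))"
  by (rule smooth_at_top_compose[of D UNIV]) (auto simp: smooth_on_set_exp)

lemma smooth_at_top_ln: "smooth_at_top D \<Longrightarrow> \<forall>\<^sub>F x in at_top. D x > 0 \<Longrightarrow> smooth_at_top (\<lambda>x. ln (D x))"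
  by (rule smooth_at_top_compose[OF _ _ smooth_on_set_ln]) auto

lemma smooth_at_top_inverse:
  "smooth_at_top D \<Longrightarrow> \<forall>\<^sub>F x in at_top. D x > 0 \<Longrightarrow> smooth_at_top (\<lambda>x. inverse (D x))"
  by (rule smooth_at_top_compose[OF _ _ smooth_on_set_inverse]) auto

lemma eventually_higher_deriv_cong:
  fixes u v :: "real \<Rightarrow> real"
  assumes "\<forall>\<^sub>F x in at_top. u x = v x"
  shows "\<forall>\<^sub>F x in at_top. (deriv ^^ j) u x = (deriv ^^ j) v x"
proof -
  obtain a where a: "\<forall>x\<ge>a. u x = v x" using assms unfolding eventually_at_top_linorder by blast
  show ?thesis
    using eventually_gt_at_top[of a] by eventually_elim (rule higher_deriv_cong_open[of "{a<..}"], use a in auto)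
qed

lemma eventually_deriv_add:
  assumes "smooth_at_top u" "smooth_at_top v"
  shows "\<forall>\<^sub>F x in at_top. deriv (\<lambda>x. u x + v x) x = deriv u x + deriv v x"
  using assms[THEN smooth_at_top_eventually_differentiable]
  by eventually_elim (auto intro!: DERIV_imp_deriv DERIV_add DERIV_deriv)

lemma eventually_deriv_diff:
  assumes "smooth_at_top u" "smooth_at_top v"
  shows "\<forall>\<^sub>F x in at_top. deriv (\<lambda>x. u x - v x) x = deriv u x - deriv v x"
  using assms[THEN smooth_at_top_eventually_differentiable]
  by eventually_elim (auto intro!: DERIV_imp_deriv DERIV_diff DERIV_deriv)

lemma eventually_deriv_mult:
  assumes "smooth_at_top u" "smooth_at_top v"
  shows "\<forall>\<^sub>F x in at_top. deriv (\<lambda>x. u x * v x) x = deriv u x * v x + u x * deriv v x"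
  using assms[THEN smooth_at_top_eventually_differentiable]
  by eventually_elim (auto intro!: DERIV_imp_deriv derivative_eq_intros DERIV_deriv)

lemma eventually_deriv_compose:
  assumes "smooth_at_top G" "open U" "smooth_on_set U F" "\<forall>\<^sub>F x in at_top. G x \<in> U"
  shows "\<forall>\<^sub>F x in at_top. deriv (\<lambda>x. F (G x)) x = deriv F (G x) * deriv G x"
  using smooth_at_top_eventually_differentiable[OF assms(1)] assms(4)
proof eventually_elim
  case (elim x)
  then show ?case
    using assms(3) smooth_on_set_imp_differentiable
    by (intro DERIV_imp_deriv DERIV_chain2[OF DERIV_deriv DERIV_deriv]) auto
qed

lemma eventually_deriv_compose_at_top:
  assumes "smooth_at_top q" "filterlim G at_top at_top" "smooth_at_top G"
  shows "\<forall>\<^sub>F x in at_top. deriv (\<lambda>x. q (G x)) x = deriv q (G x) * deriv G x"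
proof -
  obtain a where "smooth_on_set {a<..} q"
    using assms(1) unfolding smooth_at_top_def eventually_at_top_linorder by auto
  then show ?thesis
    using assms(2) by (intro eventually_deriv_compose[OF assms(3)]) (auto simp: filterlim_at_top_dense)
qed

definition derivs_vanish :: "nat \<Rightarrow> (real \<Rightarrow> real) \<Rightarrow> bool" where
  "derivs_vanish m u \<longleftrightarrow> (\<forall>j<m. ((deriv ^^ Suc j) u \<longlongrightarrow> 0) at_top)"

lemma derivs_vanish_0 [simp]: "derivs_vanish 0 u"
  unfolding derivs_vanish_def by auto

lemma derivs_vanish_Suc:
  "derivs_vanish (Suc m) u \<longleftrightarrow> (deriv u \<longlongrightarrow> 0) at_top \<and> derivs_vanish m (deriv u)"
  unfolding derivs_vanish_def by (simp add: All_less_Suc2 funpow_Suc_right del: funpow.simps)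

lemma derivs_vanish_SucD: "derivs_vanish (Suc m) u \<Longrightarrow> derivs_vanish m u"
  unfolding derivs_vanish_def by auto

lemma derivs_vanish_cong:
  fixes u v :: "real \<Rightarrow> real"
  assumes "\<forall>\<^sub>F x in at_top. u x = v x" "derivs_vanish m u"
  shows "derivs_vanish m v"
  using assms(2) tendsto_cong[OF eventually_higher_deriv_cong[OF assms(1)]]
  unfolding derivs_vanish_def by blast

lemma derivs_vanish_SucI:
  assumes "\<forall>\<^sub>F x in at_top. deriv u x = u' x" "(u' \<longlongrightarrow> 0) at_top" "derivs_vanish m u'"
  shows "derivs_vanish (Suc m) u"
proof -
  have "\<forall>\<^sub>F x in at_top. u' x = deriv u x" using assms(1) by (simp add: eq_commute)
  then show ?thesis
    using assms(2,3) tendsto_cong derivs_vanish_cong unfolding derivs_vanish_Suc by blast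
qed

lemma derivs_vanish_const: "derivs_vanish m (\<lambda>x. c)"
  by (induction m arbitrary: c) (simp_all add: derivs_vanish_Suc)

lemma derivs_vanish_add:
  assumes "smooth_at_top u" "smooth_at_top v" "derivs_vanish m u" "derivs_vanish m v"
  shows "derivs_vanish m (\<lambda>x. u x + v x)"
  using assms
proof (induction m arbitrary: u v)
  case (Suc m)
  show ?case
  proof (rule derivs_vanish_SucI[OF eventually_deriv_add[OF Suc.prems(1,2)]])
    show "((\<lambda>x. deriv u x + deriv v x) \<longlongrightarrow> 0) at_top"
      using tendsto_add[of "deriv u" 0 _ "deriv v" 0] Suc.prems(3,4) by (simp add: derivs_vanish_Suc)
    show "derivs_vanish m (\<lambda>x. deriv u x + deriv v x)"
      using Suc.prems by (intro Suc.IH smooth_at_top_deriv) (auto simp: derivs_vanish_Suc)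
  qed
qed simp

lemma derivs_vanish_mult:
  assumes "smooth_at_top u" "smooth_at_top v" "(u \<longlongrightarrow> a) at_top" "(v \<longlongrightarrow> b) at_top"
    "derivs_vanish m u" "derivs_vanish m v"
  shows "derivs_vanish m (\<lambda>x. u x * v x)"
  using assms
proof (induction m arbitrary: u v a b)
  case (Suc m)
  have du: "(deriv u \<longlongrightarrow> 0) at_top" "derivs_vanish m (deriv u)"
    and dv: "(deriv v \<longlongrightarrow> 0) at_top" "derivs_vanish m (deriv v)"
    using Suc.prems(5,6) unfolding derivs_vanish_Suc by auto
  show ?case
  proof (rule derivs_vanish_SucI[OF eventually_deriv_mult[OF Suc.prems(1,2)]])
    show "((\<lambda>x. deriv u x * v x + u x * deriv v x) \<longlongrightarrow> 0) at_top"
      using tendsto_add[OF tendsto_mult[OF du(1) Suc.prems(4)] tendsto_mult[OF Suc.prems(3) dv(1)]] by simp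
    have "derivs_vanish m (\<lambda>x. deriv u x * v x)"
      using Suc.prems derivs_vanish_SucD du by (intro Suc.IH smooth_at_top_deriv) auto
    moreover have "derivs_vanish m (\<lambda>x. u x * deriv v x)"
      using Suc.prems derivs_vanish_SucD dv by (intro Suc.IH smooth_at_top_deriv) auto
    ultimately show "derivs_vanish m (\<lambda>x. deriv u x * v x + u x * deriv v x)"
      using Suc.prems(1,2)
      by (intro derivs_vanish_add smooth_at_top_mult smooth_at_top_deriv) auto
  qed
qed simp

lemma derivs_vanish_cmult:
  "smooth_at_top u \<Longrightarrow> (u \<longlongrightarrow> a) at_top \<Longrightarrow> derivs_vanish m u \<Longrightarrow> derivs_vanish m (\<lambda>x. c * u x)"
  by (rule derivs_vanish_mult[OF smooth_at_top_const _ tendsto_const _ derivs_vanish_const])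

lemma derivs_vanish_diff:
  assumes "smooth_at_top u" "smooth_at_top v" "(v \<longlongrightarrow> b) at_top" "derivs_vanish m u" "derivs_vanish m v"
  shows "derivs_vanish m (\<lambda>x. u x - v x)"
  using derivs_vanish_add[OF assms(1) smooth_at_top_mult[OF smooth_at_top_const assms(2)] assms(4)
      derivs_vanish_cmult[OF assms(2,3,5), of "-1"]]
  by simp

lemma derivs_vanish_compose_smooth:
  assumes "smooth_at_top \<psi>" "(\<psi> \<longlongrightarrow> c) at_top" "open U" "c \<in> U" "smooth_on_set U F" "derivs_vanish m \<psi>"
  shows "derivs_vanish m (\<lambda>x. F (\<psi> x))"
  using assms(5,6)
proof (induction m arbitrary: F)
  case (Suc m)
  have d\<psi>: "(deriv \<psi> \<longlongrightarrow> 0) at_top" "derivs_vanish m (deriv \<psi>)"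
    using Suc.prems(2) unfolding derivs_vanish_Suc by auto
  have U: "\<forall>\<^sub>F x in at_top. \<psi> x \<in> U" by (rule topological_tendstoD[OF assms(2,3,4)])
  have dF: "smooth_on_set U (deriv F)" by (rule smooth_on_set_deriv[OF Suc.prems(1)])
  have "isCont (deriv F) c"
    by (rule differentiable_imp_continuous_within[OF smooth_on_set_imp_differentiable[OF dF assms(4)]])
  then have lim: "((\<lambda>x. deriv F (\<psi> x)) \<longlongrightarrow> deriv F c) at_top"
    by (rule isCont_tendsto_compose[OF _ assms(2)])
  show ?case
  proof (rule derivs_vanish_SucI[OF eventually_deriv_compose[OF assms(1,3) Suc.prems(1) U]])
    show "((\<lambda>x. deriv F (\<psi> x) * deriv \<psi> x) \<longlongrightarrow> 0) at_top"
      using tendsto_mult[OF lim d\<psi>(1)] by simp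
    show "derivs_vanish m (\<lambda>x. deriv F (\<psi> x) * deriv \<psi> x)"
      by (rule derivs_vanish_mult[OF smooth_at_top_compose[OF assms(1,3) dF U] smooth_at_top_deriv[OF assms(1)]
          lim d\<psi>(1) Suc.IH[OF dF derivs_vanish_SucD[OF Suc.prems(2)]] d\<psi>(2)])
  qed
qed simp

lemma derivs_vanish_compose_at_top:
  assumes "filterlim G at_top at_top" "smooth_at_top G" "(deriv G \<longlongrightarrow> d) at_top" "\<forall>n. derivs_vanish n (deriv G)"
    "smooth_at_top q" "derivs_vanish m q"
  shows "derivs_vanish m (\<lambda>x. q (G x))"
  using assms(5,6)
proof (induction m arbitrary: q)
  case (Suc m)
  have dq: "(deriv q \<longlongrightarrow> 0) at_top" "derivs_vanish m (deriv q)"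
    using Suc.prems(2) unfolding derivs_vanish_Suc by auto
  have lim: "((\<lambda>x. deriv q (G x)) \<longlongrightarrow> 0) at_top" by (rule filterlim_compose[OF dq(1) assms(1)])
  show ?case
  proof (rule derivs_vanish_SucI[OF eventually_deriv_compose_at_top[OF Suc.prems(1) assms(1,2)]])
    show "((\<lambda>x. deriv q (G x) * deriv G x) \<longlongrightarrow> 0) at_top"
      using tendsto_mult[OF lim assms(3)] by simp
    show "derivs_vanish m (\<lambda>x. deriv q (G x) * deriv G x)"
      using assms(4) by (intro derivs_vanish_mult[OF smooth_at_top_compose_at_top[OF _ assms(1,2)]
          smooth_at_top_deriv[OF assms(2)] lim assms(3) Suc.IH[OF _ dq(2)]] smooth_at_top_deriv Suc.prems) auto
  qed
qed simp

text \<open>The hypothesis H' = R \<circ> H is how inverse functions enter: the inverse of Psi satisfies it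
  with R = 1 / Psi'.\<close>

lemma derivs_vanish_compose_ode:
  assumes "filterlim H at_top at_top" "smooth_at_top H" "smooth_at_top R" "(R \<longlongrightarrow> r) at_top"
    "\<forall>n. derivs_vanish n R" "\<forall>\<^sub>F w in at_top. deriv H w = R (H w)"
    and "smooth_at_top q" "(q \<longlongrightarrow> c) at_top" "\<forall>n. derivs_vanish n q"
  shows "derivs_vanish m (\<lambda>w. q (H w))"
  using assms(7-9)
proof (induction m arbitrary: q c)
  case (Suc m)
  define \<phi> where "\<phi> s = deriv q s * R s" for s
  have dq: "(deriv q \<longlongrightarrow> 0) at_top" "\<forall>n. derivs_vanish n (deriv q)"
    using Suc.prems(3) derivs_vanish_Suc by blast+
  have \<phi>: "smooth_at_top \<phi>" "(\<phi> \<longlongrightarrow> 0) at_top" "\<forall>n. derivs_vanish n \<phi>"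
    unfolding \<phi>_def using tendsto_mult[OF dq(1) assms(4)] Suc.prems(1) assms(3,4,5) dq
    by (auto intro!: smooth_at_top_mult smooth_at_top_deriv derivs_vanish_mult)
  have "\<forall>\<^sub>F w in at_top. deriv (\<lambda>w. q (H w)) w = \<phi> (H w)"
    using eventually_deriv_compose_at_top[OF Suc.prems(1) assms(1,2)] assms(6)
    by eventually_elim (simp add: \<phi>_def)
  then show ?case
    by (rule derivs_vanish_SucI[OF _ filterlim_compose[OF \<phi>(2) assms(1)] Suc.IH[OF \<phi>]])
qed simp

lemma derivs_vanish_exp:
  assumes "smooth_at_top D" "filterlim D at_bot at_top" "(deriv D \<longlongrightarrow> d) at_top" "\<forall>n. derivs_vanish n (deriv D)"
  shows "derivs_vanish m (\<lambda>x. exp (D x))"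
proof (induction m)
  case (Suc m)
  have lim: "((\<lambda>x. exp (D x)) \<longlongrightarrow> 0) at_top" by (rule filterlim_compose[OF exp_at_bot assms(2)])
  have deriv_eq: "\<forall>\<^sub>F x in at_top. deriv (\<lambda>x. exp (D x)) x = exp (D x) * deriv D x"
    using eventually_deriv_compose[OF assms(1) open_UNIV smooth_on_set_exp]
    by (simp add: DERIV_imp_deriv[OF DERIV_exp])
  have "derivs_vanish m (\<lambda>x. exp (D x) * deriv D x)"
    using assms(4) by (intro derivs_vanish_mult[OF smooth_at_top_exp[OF assms(1)]
        smooth_at_top_deriv[OF assms(1)] lim assms(3) Suc]) auto
  then show ?case
    using tendsto_mult[OF lim assms(3)] by (intro derivs_vanish_SucI[OF deriv_eq]) auto
qed simp

lemma derivs_vanish_inverse: "derivs_vanish m (inverse :: real \<Rightarrow> real)"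
proof (induction m)
  case (Suc m)
  have inv: "smooth_at_top (inverse :: real \<Rightarrow> real)" "((inverse :: real \<Rightarrow> real) \<longlongrightarrow> 0) at_top"
    using smooth_at_topI[OF smooth_on_set_inverse] tendsto_inverse_0_at_top[OF filterlim_ident] by auto
  have "\<forall>\<^sub>F x in at_top. deriv inverse x = - (inverse x * inverse (x::real))"
    using eventually_gt_at_top[of 0]
    by eventually_elim (auto intro!: DERIV_imp_deriv derivative_eq_intros simp: power2_eq_square field_simps)
  then show ?case
    using tendsto_minus[OF tendsto_mult[OF inv(2) inv(2)]]
      derivs_vanish_cmult[OF smooth_at_top_mult[OF inv(1) inv(1)] tendsto_mult[OF inv(2) inv(2)]
        derivs_vanish_mult[OF inv(1) inv(1) inv(2) inv(2) Suc Suc], of "-1"]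
    by (intro derivs_vanish_SucI) auto
qed simp

lemma derivs_vanish_compose_ln:
  assumes "smooth_at_top q" "(deriv q \<longlongrightarrow> c) at_top" "\<forall>n. derivs_vanish n (deriv q)"
  shows "derivs_vanish m (\<lambda>u. q (ln u))"
proof (cases m)
  case (Suc n)
  have ln: "smooth_at_top (ln :: real \<Rightarrow> real)" by (rule smooth_at_topI[OF smooth_on_set_ln])
  have deriv_ln: "\<forall>\<^sub>F u in at_top. deriv ln u = inverse (u::real)"
    using eventually_gt_at_top[of 0]
    by eventually_elim (simp add: DERIV_imp_deriv[OF DERIV_ln])
  have inv: "((inverse :: real \<Rightarrow> real) \<longlongrightarrow> 0) at_top"
    using tendsto_inverse_0_at_top[OF filterlim_ident] by simp
  have "(deriv ln \<longlongrightarrow> (0::real)) at_top" "\<forall>n. derivs_vanish n (deriv (ln :: real \<Rightarrow> real))"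
    using tendsto_cong[OF deriv_ln] inv derivs_vanish_cong[OF deriv_ln[unfolded eq_commute[of "deriv ln _"]]]
      derivs_vanish_inverse by auto
  then have "derivs_vanish n (\<lambda>u. deriv q (ln u))"
    using assms(3) by (intro derivs_vanish_compose_at_top[OF ln_at_top ln _ _ smooth_at_top_deriv[OF assms(1)]]) auto
  moreover have lim: "((\<lambda>u. deriv q (ln u)) \<longlongrightarrow> c) at_top" by (rule filterlim_compose[OF assms(2) ln_at_top])
  ultimately have "derivs_vanish n (\<lambda>u. deriv q (ln u) * inverse u)"
    by (intro derivs_vanish_mult[OF smooth_at_top_compose_at_top[OF smooth_at_top_deriv[OF assms(1)] ln_at_top ln]
          smooth_at_topI[OF smooth_on_set_inverse] lim inv _ derivs_vanish_inverse])
  moreover have "\<forall>\<^sub>F u in at_top. deriv (\<lambda>u. q (ln u)) u = deriv q (ln u) * inverse u"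
    using eventually_deriv_compose_at_top[OF assms(1) ln_at_top ln] deriv_ln by eventually_elim simp
  ultimately show ?thesis
    unfolding Suc using tendsto_mult[OF lim inv] by (intro derivs_vanish_SucI) auto
qed simp

lemma increment_ge_of_deriv_ge:
  fixes D :: "real \<Rightarrow> real"
  assumes "\<And>x. x \<ge> a \<Longrightarrow> D differentiable (at x) \<and> deriv D x \<ge> c" "a \<le> x" "x \<le> y"
  shows "D y - D x \<ge> c * (y - x)"
proof (cases "x = y")
  case False
  then have xy: "x < y" using assms(3) by simp
  have "continuous_on {x..y} D"
    using assms by (intro continuous_at_imp_continuous_on ballI differentiable_imp_continuous_within) auto
  then obtain l z where z: "x < z" "z < y" "DERIV D z :> l" "D y - D x = (y - x) * l"
    using MVT[OF xy] assms by (meson less_imp_le order.trans)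
  have "l = deriv D z" using DERIV_imp_deriv[OF z(3)] by simp
  then have "l \<ge> c" using assms z by auto
  then show ?thesis using z(4) xy by (simp add: mult_right_mono mult.commute)
qed simp

lemma filterlim_at_top_of_deriv_tendsto_pos:
  fixes D :: "real \<Rightarrow> real"
  assumes "smooth_at_top D" "(deriv D \<longlongrightarrow> d) at_top" "d > 0"
  shows "filterlim D at_top at_top"
proof -
  have "\<forall>\<^sub>F x in at_top. D differentiable (at x) \<and> deriv D x \<ge> d/2"
    using smooth_at_top_eventually_differentiable[OF assms(1)] order_tendstoD(1)[OF assms(2), of "d/2"] assms(3)
    by (auto elim: eventually_elim2)
  then obtain a where a: "\<And>x. x \<ge> a \<Longrightarrow> D differentiable (at x) \<and> deriv D x \<ge> d/2"
    unfolding eventually_at_top_linorder by blast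
  show ?thesis unfolding filterlim_at_top
  proof
    fix Z
    show "\<forall>\<^sub>F x in at_top. Z \<le> D x"
      using eventually_ge_at_top[of "max a (a + 2 * (Z - D a) / d)"]
    proof eventually_elim
      case (elim x)
      have "D x - D a \<ge> d/2 * (x - a)" by (rule increment_ge_of_deriv_ge[OF a]) (use elim in auto)
      moreover have "d/2 * (x - a) \<ge> Z - D a"
        using elim assms(3) mult_left_mono[of "2 * (Z - D a) / d" "x - a" "d/2"] by auto
      ultimately show ?case by linarith
    qed
  qed
qed

lemma SR_log_coordinates:
  assumes "SR a f"
  obtains z where "z \<ge> 1" "\<And>x. x > z \<Longrightarrow> f x > 0" "smooth_at_top (\<lambda>u. ln (f (exp u)))"
    "(deriv (\<lambda>u. ln (f (exp u))) \<longlongrightarrow> a) at_top" "\<forall>n. derivs_vanish n (deriv (\<lambda>u. ln (f (exp u))))"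
    "\<And>u. u > ln z \<Longrightarrow> deriv f (exp u) = exp (ln (f (exp u)) - u) * deriv (\<lambda>u. ln (f (exp u))) u"
proof -
  define F where "F = (\<lambda>u. ln (f (exp u)))"
  obtain y z where f: "smooth_on_set {y<..} f" and z: "z \<ge> 1" "z \<ge> y" and pos: "\<forall>x>z. f x > 0"
    and lim1: "(deriv F \<longlongrightarrow> a) at_top" and lim2: "\<forall>m::nat. m \<ge> 2 \<longrightarrow> ((deriv ^^ m) F \<longlongrightarrow> 0) at_top"
    using assms unfolding SR_def Let_def F_def by blast
  have exp_gt: "exp u > z" if "u > ln z" for u
    using z(1) that by (metis exp_less_cancel_iff exp_ln less_le_trans zero_less_one)
  have f': "smooth_on_set {z<..} f" by (rule smooth_on_set_subset[OF f]) (use z in auto)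
  have "smooth_on_set {ln z<..} F" unfolding F_def
    using exp_gt pos by (intro smooth_on_set_compose[OF _ smooth_on_set_compose[OF _ smooth_on_set_exp _ f']
          _ smooth_on_set_ln]) auto
  then have "smooth_at_top F" by (rule smooth_at_topI)
  moreover have "((deriv ^^ Suc j) (deriv F) \<longlongrightarrow> 0) at_top" for j
    using lim2[rule_format, of "Suc (Suc j)"] by (simp only: funpow_Suc_right o_def)
  then have "\<forall>n. derivs_vanish n (deriv F)" unfolding derivs_vanish_def by blast
  moreover have "deriv f (exp u) = exp (F u - u) * deriv F u" if u: "u > ln z" for u
  proof -
    have fd: "f differentiable (at (exp u))" by (rule smooth_on_set_imp_differentiable[OF f']) (use exp_gt u in auto)
    have fp: "f (exp u) > 0" using pos exp_gt u by auto
    have "deriv F u = inverse (f (exp u)) * (deriv f (exp u) * exp u)"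
      unfolding F_def using fp
      by (intro DERIV_imp_deriv DERIV_chain2[OF DERIV_ln DERIV_chain2[OF DERIV_deriv[OF fd] DERIV_exp]]) auto
    moreover have "exp (F u - u) = f (exp u) / exp u" unfolding F_def using fp by (simp add: exp_diff)
    ultimately have "exp (F u - u) * deriv F u = (f (exp u) / exp u) * (inverse (f (exp u)) * (deriv f (exp u) * exp u))"
      by simp
    then show ?thesis using fp by simp
  qed
  ultimately show ?thesis using that z(1) pos lim1 unfolding F_def by blast
qed

lemma SR_I:
  assumes "smooth_on_set {z<..} g" "\<And>x. x > z \<Longrightarrow> g x > 0"
    "(deriv (\<lambda>u. ln (g (exp u))) \<longlongrightarrow> c) at_top" "\<forall>n. derivs_vanish n (deriv (\<lambda>u. ln (g (exp u))))"
  shows "SR c g"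
proof -
  define h where "h u = ln (g (exp u))" for u
  have "((deriv ^^ m) h \<longlongrightarrow> 0) at_top" if "m \<ge> 2" for m
  proof -
    define j where "j = m - 2"
    have "m = Suc (Suc j)" using that by (simp add: j_def)
    moreover have "(deriv ^^ Suc (Suc j)) h = (deriv ^^ Suc j) (deriv h)"
      by (simp only: funpow_Suc_right o_def)
    moreover have "((deriv ^^ Suc j) (deriv h) \<longlongrightarrow> 0) at_top"
      using assms(4) unfolding derivs_vanish_def h_def by blast
    ultimately show ?thesis by simp
  qed
  moreover have "\<forall>x>max 1 z. g x > 0" using assms(2) by simp
  ultimately show ?thesis
    unfolding SR_def Let_def using assms(1,3) unfolding h_def
    by (intro exI[of _ z] exI[of _ "max 1 z"] conjI) simp_all
qed

lemma less_ln_of_exp_less: "exp a < x \<Longrightarrow> a < ln (x::real)"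
  using ln_strict_mono[of "exp a" x] by simp

lemma abs_mult_minus_one_le:
  fixes x y e :: real
  assumes "\<bar>x - 1\<bar> < e" "\<bar>y - 1\<bar> < e" "e \<le> 1"
  shows "\<bar>x * y - 1\<bar> \<le> 3 * e"
proof -
  have "\<bar>y\<bar> \<le> 2" using assms(2,3) by linarith
  then have "\<bar>(x - 1) * y\<bar> \<le> e * 2"
    unfolding abs_mult using assms(1) by (intro mult_mono) auto
  moreover have "x * y - 1 = (x - 1) * y + (y - 1)" by (simp add: algebra_simps)
  ultimately show ?thesis using assms(2) by linarith
qed

lemma abs_ln_one_plus_le:
  fixes u :: real
  assumes "\<bar>u\<bar> \<le> 1/2" shows "\<bar>ln (1 + u)\<bar> \<le> 2 * \<bar>u\<bar>"
proof -
  have "2 * u\<^sup>2 \<le> \<bar>u\<bar>"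
    using mult_right_mono[of "2 * \<bar>u\<bar>" 1 "\<bar>u\<bar>"] assms by (simp add: power2_eq_square abs_mult_self_eq)
  then show ?thesis using abs_ln_one_plus_x_minus_x_bound[OF assms] by linarith
qed

lemma ln_ln_mult_bound:
  fixes L \<gamma> y :: real
  assumes "L > 1" "\<gamma> * (ln L / L) \<le> 1/2" "L powr - \<gamma> \<le> y" "y \<le> L powr \<gamma>"
  shows "y > 0" "ln y + L \<ge> L / 2" "\<bar>ln (ln y + L) - ln L\<bar> \<le> 2 * \<gamma> * (ln L / L)"
proof -
  have "L powr - \<gamma> > 0" using assms(1) by simp
  then show y0: "y > 0" using assms(3) by linarith
  have "- \<gamma> * ln L \<le> ln y" "ln y \<le> \<gamma> * ln L"
    using assms(1,3,4) y0 ln_le_cancel_iff[of "L powr - \<gamma>" y] ln_le_cancel_iff[of y "L powr \<gamma>"]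
    by (auto simp: ln_powr)
  then have u: "\<bar>ln y / L\<bar> \<le> \<gamma> * (ln L / L)" using assms(1) by (simp add: abs_le_iff field_simps)
  then have "\<bar>ln y / L\<bar> \<le> 1/2" using assms(2) by linarith
  then have pos: "1 + ln y / L \<ge> 1/2" using abs_ge_minus_self[of "ln y / L"] by linarith
  have split: "ln y + L = L * (1 + ln y / L)" using assms(1) by (simp add: field_simps)
  then show "ln y + L \<ge> L / 2" using assms(1) pos mult_left_mono[of "1/2" "1 + ln y / L" L] by simp
  have "\<bar>ln (ln y + L) - ln L\<bar> = \<bar>ln (1 + ln y / L)\<bar>"
  proof -
    have "L > 0" "1 + ln y / L > 0" using assms(1) pos by linarith+
    then show ?thesis unfolding split by (simp add: ln_mult)
  qed
  also have "\<dots> \<le> 2 * \<bar>ln y / L\<bar>" by (rule abs_ln_one_plus_le[OF \<open>\<bar>ln y / L\<bar> \<le> 1/2\<close>])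
  finally show "\<bar>ln (ln y + L) - ln L\<bar> \<le> 2 * \<gamma> * (ln L / L)" using u by linarith
qed

text \<open>For y between (ln \<Lambda>) powr -\<gamma> and (ln \<Lambda>) powr \<gamma>, the shift ln y is of order
  ln (ln \<Lambda>), which is negligible against ln \<Lambda>.\<close>

lemma ln_ln_mult_close:
  fixes \<gamma> \<theta> :: real
  assumes "\<theta> > 0"
  shows "\<forall>\<^sub>F \<Lambda> in at_top. \<forall>y. ln \<Lambda> powr - \<gamma> \<le> y \<and> y \<le> ln \<Lambda> powr \<gamma> \<longrightarrow>
    y > 0 \<and> ln (y * \<Lambda>) \<ge> ln \<Lambda> / 2 \<and> \<bar>ln (ln (y * \<Lambda>)) - ln (ln \<Lambda>)\<bar> < \<theta>"
proof -
  have lim: "((\<lambda>\<Lambda>::real. 2 * \<gamma> * (ln (ln \<Lambda>) / ln \<Lambda>)) \<longlongrightarrow> 2 * \<gamma> * 0) at_top"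
    by (intro tendsto_mult tendsto_const filterlim_compose[OF ln_x_over_x_tendsto_0 ln_at_top])
  have "\<forall>\<^sub>F \<Lambda>::real in at_top. 2 * \<gamma> * (ln (ln \<Lambda>) / ln \<Lambda>) < min 1 \<theta>"
    using order_tendstoD(2)[OF lim, of "min 1 \<theta>"] assms by simp
  moreover have "\<forall>\<^sub>F \<Lambda> in at_top. ln \<Lambda> > (1::real)"
    using ln_at_top unfolding filterlim_at_top_dense by blast
  ultimately show ?thesis
    using eventually_gt_at_top[of 0]
  proof eventually_elim
    case (elim \<Lambda>)
    have "2 * \<gamma> * (ln (ln \<Lambda>) / ln \<Lambda>) < 1" and small_\<theta>: "2 * \<gamma> * (ln (ln \<Lambda>) / ln \<Lambda>) < \<theta>"
      using elim(1) by simp_all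
    then have small: "\<gamma> * (ln (ln \<Lambda>) / ln \<Lambda>) \<le> 1/2" by linarith
    show ?case
    proof (intro allI impI)
      fix y assume "ln \<Lambda> powr - \<gamma> \<le> y \<and> y \<le> ln \<Lambda> powr \<gamma>"
      then have "y > 0" "ln y + ln \<Lambda> \<ge> ln \<Lambda> / 2"
        "\<bar>ln (ln y + ln \<Lambda>) - ln (ln \<Lambda>)\<bar> \<le> 2 * \<gamma> * (ln (ln \<Lambda>) / ln \<Lambda>)"
        using ln_ln_mult_bound[OF elim(2) small] by auto
      then show "y > 0 \<and> ln (y * \<Lambda>) \<ge> ln \<Lambda> / 2 \<and> \<bar>ln (ln (y * \<Lambda>)) - ln (ln \<Lambda>)\<bar> < \<theta>"
        using elim(3) small_\<theta> by (simp add: ln_mult)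
    qed
  qed
qed

subsection \<open>The equation in logarithmic coordinates\<close>

text \<open>With x = exp s, f x = exp (F s) and k x = exp (K s), Q s is x f'(x) - f x + k x and P s is
  f'(x); B \<sigma> * exp (- \<sigma>) is the ratio P' \<sigma> / Q' \<sigma>. The parameter T0 only bounds the region where
  the construction takes place from below.\<close>

locale log_equation =
  fixes F K :: "real \<Rightarrow> real" and \<alpha> b T0 :: real
  assumes alpha_gt_1: "\<alpha> > 1" and b_less_alpha: "b < \<alpha>"
    and smooth_F: "smooth_at_top F" and smooth_K: "smooth_at_top K"
    and deriv_F_tendsto: "(deriv F \<longlongrightarrow> \<alpha>) at_top" and deriv_K_tendsto: "(deriv K \<longlongrightarrow> b) at_top"
    and derivs_vanish_F: "\<forall>n. derivs_vanish n (deriv F)" and derivs_vanish_K: "\<forall>n. derivs_vanish n (deriv K)"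
begin

definition "E s = exp (K s - F s)"
definition "W s = deriv F s - 1 + E s"
definition "Q s = exp (F s) * (deriv F s - 1) + exp (K s)"
definition "Psi s = ln (Q s)"
definition "A s = deriv F s * (deriv F s - 1) + deriv (deriv F) s"
definition "P s = exp (F s - s) * deriv F s"
definition "B s = A s / (A s + E s * deriv K s)"
definition "R s = inverse (deriv Psi s)"

lemma Q_eq_exp_F_W: "Q s = exp (F s) * W s"
  unfolding Q_def W_def E_def by (simp add: algebra_simps exp_diff)

lemma E_asymptotics: "smooth_at_top E" "(E \<longlongrightarrow> 0) at_top" "\<forall>n. derivs_vanish n E"
proof -
  define D where "D s = K s - F s" for s
  have D: "smooth_at_top D" unfolding D_def by (rule smooth_at_top_diff[OF smooth_K smooth_F])
  have deriv_D: "\<forall>\<^sub>F x in at_top. deriv D x = deriv K x - deriv F x"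
    unfolding D_def by (rule eventually_deriv_diff[OF smooth_K smooth_F])
  have "((\<lambda>x. deriv K x - deriv F x) \<longlongrightarrow> b - \<alpha>) at_top"
    by (rule tendsto_diff[OF deriv_K_tendsto deriv_F_tendsto])
  then have lim_D: "(deriv D \<longlongrightarrow> b - \<alpha>) at_top"
    using tendsto_cong[OF deriv_D] by simp
  have "derivs_vanish n (\<lambda>x. deriv K x - deriv F x)" for n
    using derivs_vanish_F derivs_vanish_K
    by (intro derivs_vanish_diff[OF smooth_at_top_deriv[OF smooth_K] smooth_at_top_deriv[OF smooth_F]
          deriv_F_tendsto]) auto
  then have vanish_D: "\<forall>n. derivs_vanish n (deriv D)"
    using derivs_vanish_cong[OF deriv_D[unfolded eq_commute[of "deriv D _"]]] by blast
  have "filterlim (\<lambda>x. - D x) at_top at_top"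
  proof (rule filterlim_at_top_of_deriv_tendsto_pos)
    show "smooth_at_top (\<lambda>x. - D x)"
      using smooth_at_top_mult[OF smooth_at_top_const D, of "-1"] by simp
    have "\<forall>\<^sub>F x in at_top. deriv (\<lambda>x. - D x) x = - deriv D x"
      using eventually_deriv_mult[OF smooth_at_top_const D, of "-1"] by simp
    then show "(deriv (\<lambda>x. - D x) \<longlongrightarrow> \<alpha> - b) at_top"
      using tendsto_cong tendsto_minus[OF lim_D] by fastforce
  qed (use b_less_alpha in simp)
  then have D_bot: "filterlim D at_bot at_top" unfolding filterlim_uminus_at_bot .
  show "smooth_at_top E" unfolding E_def using smooth_at_top_exp[OF D] unfolding D_def .
  show "(E \<longlongrightarrow> 0) at_top" unfolding E_def using filterlim_compose[OF exp_at_bot D_bot] unfolding D_def .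
  show "\<forall>n. derivs_vanish n E" unfolding E_def using derivs_vanish_exp[OF D D_bot lim_D vanish_D] unfolding D_def by blast
qed

lemma W_asymptotics: "smooth_at_top W" "(W \<longlongrightarrow> \<alpha> - 1) at_top" "\<forall>n. derivs_vanish n W"
  "\<forall>\<^sub>F x in at_top. W x > 0"
proof -
  have F1: "smooth_at_top (\<lambda>s. deriv F s - 1)" by (rule smooth_at_top_diff[OF smooth_at_top_deriv[OF smooth_F] smooth_at_top_const])
  show "smooth_at_top W" unfolding W_def by (rule smooth_at_top_add[OF F1 E_asymptotics(1)])
  show lim: "(W \<longlongrightarrow> \<alpha> - 1) at_top"
    unfolding W_def using tendsto_add[OF tendsto_diff[OF deriv_F_tendsto tendsto_const] E_asymptotics(2)] by simp
  have "derivs_vanish n (\<lambda>s. deriv F s - 1)" for n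
    using derivs_vanish_F by (intro derivs_vanish_diff[OF smooth_at_top_deriv[OF smooth_F] smooth_at_top_const
          tendsto_const _ derivs_vanish_const]) auto
  then show "\<forall>n. derivs_vanish n W"
    unfolding W_def using E_asymptotics by (auto intro: derivs_vanish_add[OF F1])
  show "\<forall>\<^sub>F x in at_top. W x > 0" using order_tendstoD(1)[OF lim] alpha_gt_1 by simp
qed

lemma Psi_eventually_eq: "\<forall>\<^sub>F s in at_top. Psi s = F s + ln (W s)"
  using W_asymptotics(4) by eventually_elim (simp add: Psi_def Q_eq_exp_F_W ln_mult)

lemma Psi_asymptotics: "smooth_at_top Psi" "(deriv Psi \<longlongrightarrow> \<alpha>) at_top" "\<forall>n. derivs_vanish n (deriv Psi)"
  "filterlim Psi at_top at_top"
proof -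
  have ln_W: "smooth_at_top (\<lambda>s. ln (W s))" "\<forall>n. derivs_vanish n (\<lambda>s. ln (W s))"
    using W_asymptotics alpha_gt_1
    by (auto intro!: smooth_at_top_ln derivs_vanish_compose_smooth[OF _ _ _ _ smooth_on_set_ln])
  have sum: "smooth_at_top (\<lambda>s. F s + ln (W s))" by (rule smooth_at_top_add[OF smooth_F ln_W(1)])
  show smooth: "smooth_at_top Psi"
    using smooth_at_top_cong[OF sum] Psi_eventually_eq by (simp add: eq_commute)
  have deriv_Psi: "\<forall>\<^sub>F x in at_top. deriv Psi x = deriv F x + deriv (\<lambda>s. ln (W s)) x"
    using eventually_higher_deriv_cong[OF Psi_eventually_eq, of 1] eventually_deriv_add[OF smooth_F ln_W(1)]
    by eventually_elim simp
  have ln_W': "(deriv (\<lambda>s. ln (W s)) \<longlongrightarrow> 0) at_top" "\<forall>n. derivs_vanish n (deriv (\<lambda>s. ln (W s)))"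
    using ln_W(2) derivs_vanish_Suc by blast+
  show lim: "(deriv Psi \<longlongrightarrow> \<alpha>) at_top"
    using tendsto_cong[OF deriv_Psi] tendsto_add[OF deriv_F_tendsto ln_W'(1)] by simp
  show "\<forall>n. derivs_vanish n (deriv Psi)"
    using derivs_vanish_cong[OF deriv_Psi[unfolded eq_commute[of "deriv Psi _"]]] derivs_vanish_F ln_W'(2)
      derivs_vanish_add[OF smooth_at_top_deriv[OF smooth_F] smooth_at_top_deriv[OF ln_W(1)]] by blast
  show "filterlim Psi at_top at_top"
    by (rule filterlim_at_top_of_deriv_tendsto_pos[OF smooth lim]) (use alpha_gt_1 in simp)
qed

lemma R_asymptotics: "smooth_at_top R" "(R \<longlongrightarrow> inverse \<alpha>) at_top" "\<forall>n. derivs_vanish n R"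
proof -
  have pos: "\<forall>\<^sub>F x in at_top. deriv Psi x > 0"
    using order_tendstoD(1)[OF Psi_asymptotics(2), of 0] alpha_gt_1 by simp
  show "smooth_at_top R"
    unfolding R_def by (rule smooth_at_top_inverse[OF smooth_at_top_deriv[OF Psi_asymptotics(1)] pos])
  show "(R \<longlongrightarrow> inverse \<alpha>) at_top"
    unfolding R_def by (rule tendsto_inverse[OF Psi_asymptotics(2)]) (use alpha_gt_1 in simp)
  show "\<forall>n. derivs_vanish n R"
    unfolding R_def using alpha_gt_1 Psi_asymptotics(3)
    by (auto intro!: derivs_vanish_compose_smooth[OF smooth_at_top_deriv[OF Psi_asymptotics(1)]
          Psi_asymptotics(2) _ _ smooth_on_set_inverse])
qed

lemma B_tendsto_1: "(B \<longlongrightarrow> 1) at_top"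
  and Q_deriv_factor_eventually_pos: "\<forall>\<^sub>F s in at_top. A s + E s * deriv K s > 0"
proof -
  have "(deriv (deriv F) \<longlongrightarrow> 0) at_top" using derivs_vanish_F derivs_vanish_Suc by blast
  then have A: "(A \<longlongrightarrow> \<alpha> * (\<alpha> - 1)) at_top"
    unfolding A_def using tendsto_add[OF tendsto_mult[OF deriv_F_tendsto tendsto_diff[OF deriv_F_tendsto tendsto_const]]]
    by fastforce
  have AEK: "((\<lambda>s. A s + E s * deriv K s) \<longlongrightarrow> \<alpha> * (\<alpha> - 1)) at_top"
    using tendsto_add[OF A tendsto_mult[OF E_asymptotics(2) deriv_K_tendsto]] by simp
  have "\<alpha> * (\<alpha> - 1) > 0" using alpha_gt_1 by simp
  then show "(B \<longlongrightarrow> 1) at_top" "\<forall>\<^sub>F s in at_top. A s + E s * deriv K s > 0"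
    unfolding B_def using tendsto_divide[OF A AEK] order_tendstoD(1)[OF AEK] alpha_gt_1 by auto
qed

lemma s0_exists:
  "\<exists>s. s \<ge> T0 + 1 \<and> smooth_on_set {s - 1<..} Psi \<and> smooth_on_set {s - 1<..} F \<and> smooth_on_set {s - 1<..} K \<and>
     (\<forall>x > s - 1. deriv Psi x \<ge> \<alpha>/2 \<and> Q x > 0 \<and> A x + E x * deriv K x > 0)"
proof -
  have "\<forall>\<^sub>F x in at_top. deriv Psi x \<ge> \<alpha>/2"
    using order_tendstoD(1)[OF Psi_asymptotics(2), of "\<alpha>/2"] alpha_gt_1 by (auto elim: eventually_mono)
  moreover have "\<forall>\<^sub>F x in at_top. Q x > 0"
    using W_asymptotics(4) by eventually_elim (simp add: Q_eq_exp_F_W)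
  ultimately have "\<forall>\<^sub>F x in at_top. deriv Psi x \<ge> \<alpha>/2 \<and> Q x > 0 \<and> A x + E x * deriv K x > 0"
    using Q_deriv_factor_eventually_pos by eventually_elim auto
  then have "\<forall>\<^sub>F a in at_top. \<forall>x\<ge>a. deriv Psi x \<ge> \<alpha>/2 \<and> Q x > 0 \<and> A x + E x * deriv K x > 0"
    by (rule eventually_all_ge_at_top)
  then have "\<forall>\<^sub>F a in at_top. smooth_on_set {a<..} Psi \<and> smooth_on_set {a<..} F \<and> smooth_on_set {a<..} K \<and>
      (\<forall>x > a. deriv Psi x \<ge> \<alpha>/2 \<and> Q x > 0 \<and> A x + E x * deriv K x > 0)"
    using Psi_asymptotics(1) smooth_F smooth_K unfolding smooth_at_top_def
    by eventually_elim auto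
  then obtain a where a: "\<And>a'. a' \<ge> a \<Longrightarrow> smooth_on_set {a'<..} Psi \<and> smooth_on_set {a'<..} F \<and>
      smooth_on_set {a'<..} K \<and> (\<forall>x > a'. deriv Psi x \<ge> \<alpha>/2 \<and> Q x > 0 \<and> A x + E x * deriv K x > 0)"
    unfolding eventually_at_top_linorder by blast
  show ?thesis using a[of "max (T0 + 1) (a + 1) - 1"] by (intro exI[of _ "max (T0 + 1) (a + 1)"]) auto
qed

definition "s0 = (SOME s. s \<ge> T0 + 1 \<and> smooth_on_set {s - 1<..} Psi \<and> smooth_on_set {s - 1<..} F \<and>
   smooth_on_set {s - 1<..} K \<and> (\<forall>x > s - 1. deriv Psi x \<ge> \<alpha>/2 \<and> Q x > 0 \<and> A x + E x * deriv K x > 0))"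

lemma s0_ge_T0: "s0 \<ge> T0 + 1"
  and smooth_on_set_Psi: "smooth_on_set {s0 - 1<..} Psi"
  and smooth_on_set_F: "smooth_on_set {s0 - 1<..} F"
  and smooth_on_set_K: "smooth_on_set {s0 - 1<..} K"
  and beyond_s0: "x > s0 - 1 \<Longrightarrow> deriv Psi x \<ge> \<alpha>/2 \<and> Q x > 0 \<and> A x + E x * deriv K x > 0"
  using someI_ex[OF s0_exists] unfolding s0_def[symmetric] by blast+

lemma Psi_increment_ge: "s0 \<le> x \<Longrightarrow> x \<le> y \<Longrightarrow> Psi y - Psi x \<ge> \<alpha>/2 * (y - x)"
  by (rule increment_ge_of_deriv_ge[of s0])
     (use beyond_s0 smooth_on_set_imp_differentiable[OF smooth_on_set_Psi] in auto)

lemma Psi_strict_mono: "s0 \<le> x \<Longrightarrow> x < y \<Longrightarrow> Psi x < Psi y"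
proof -
  assume "s0 \<le> x" "x < y"
  moreover have "\<alpha>/2 * (y - x) > 0" using alpha_gt_1 \<open>x < y\<close> by simp
  ultimately show "Psi x < Psi y" using Psi_increment_ge[of x y] by simp
qed

lemma dist_le_Psi_dist:
  assumes "x \<ge> s0" "y \<ge> s0" shows "\<bar>x - y\<bar> \<le> 2 / \<alpha> * \<bar>Psi x - Psi y\<bar>"
proof -
  have *: "\<bar>b' - a'\<bar> \<le> 2 / \<alpha> * \<bar>Psi b' - Psi a'\<bar>" if "s0 \<le> a'" "a' \<le> b'" for a' b'
  proof -
    have "\<bar>b' - a'\<bar> \<le> 2 / \<alpha> * (Psi b' - Psi a')"
      using Psi_increment_ge[OF that] that alpha_gt_1 by (simp add: field_simps)
    also have "\<dots> \<le> 2 / \<alpha> * \<bar>Psi b' - Psi a'\<bar>" by (rule mult_left_mono) (use alpha_gt_1 in auto)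
    finally show ?thesis .
  qed
  show ?thesis
    using *[OF assms(1), of y] *[OF assms(2), of x] by (cases "x \<le> y") (auto simp: abs_minus_commute)
qed

definition "w0 = Psi s0"
definition "H w = (THE s. s > s0 \<and> Psi s = w)"

lemma H_Psi:
  assumes "s > s0" shows "H (Psi s) = s"
  unfolding H_def
proof (rule the_equality)
  fix t assume "t > s0 \<and> Psi t = Psi s"
  then show "t = s"
    using Psi_strict_mono[of t s] Psi_strict_mono[of s t] assms by (cases t s rule: linorder_cases) auto
qed (use assms in simp)

lemma Psi_H: assumes "w > w0" shows "H w > s0" "Psi (H w) = w"
proof -
  define S where "S = s0 + 2 * (w - w0) / \<alpha> + 1"
  have S: "S \<ge> s0" unfolding S_def using assms alpha_gt_1 by simp
  have "Psi S - Psi s0 \<ge> \<alpha>/2 * (S - s0)" by (rule Psi_increment_ge) (use S in auto)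
  moreover have "\<alpha>/2 * (S - s0) = (w - w0) + \<alpha>/2" unfolding S_def using alpha_gt_1 by (simp add: field_simps)
  ultimately have "Psi s0 \<le> w" "w \<le> Psi S" using assms alpha_gt_1 unfolding w0_def by auto
  moreover have "continuous_on {s0..S} Psi"
    using smooth_on_set_imp_differentiable[OF smooth_on_set_Psi]
    by (intro continuous_at_imp_continuous_on ballI differentiable_imp_continuous_within) auto
  ultimately obtain s where s: "s0 \<le> s" "Psi s = w" using IVT'[of Psi s0 w S] S by blast
  moreover have "s \<noteq> s0" using s(2) assms unfolding w0_def by auto
  ultimately show "H w > s0" "Psi (H w) = w" using H_Psi[of s] by auto
qed

lemma Psi_differentiable: "x > s0 - 1 \<Longrightarrow> Psi differentiable (at x)"
  by (rule smooth_on_set_imp_differentiable[OF smooth_on_set_Psi]) simp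

lemma H_has_real_derivative:
  assumes "w > w0" shows "(H has_real_derivative inverse (deriv Psi (H w))) (at w)"
proof (rule DERIV_inverse_function[where f = Psi and a = w0 and b = "w + 1"])
  have Hw: "H w > s0" "Psi (H w) = w" using Psi_H[OF assms] by auto
  show "(Psi has_real_derivative deriv Psi (H w)) (at (H w))"
    by (rule DERIV_deriv[OF Psi_differentiable]) (use Hw in simp)
  show "deriv Psi (H w) \<noteq> 0" using beyond_s0[of "H w"] Hw alpha_gt_1 by auto
  show "\<And>y. w0 < y \<Longrightarrow> y < w + 1 \<Longrightarrow> Psi (H y) = y" using Psi_H by blast
  have "isCont H (Psi (H w))"
  proof (rule isCont_inverse_function[where f = Psi and d = "(H w - s0) / 2"])
    fix z assume "\<bar>z - H w\<bar> \<le> (H w - s0) / 2"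
    then have "H w - z \<le> (H w - s0) / 2" using abs_ge_minus_self[of "z - H w"] by linarith
    with Hw have z: "z > s0" by (simp add: field_simps)
    show "H (Psi z) = z" by (rule H_Psi[OF z])
    show "isCont Psi z" by (rule differentiable_imp_continuous_within[OF Psi_differentiable]) (use z in simp)
  qed (use Hw in simp)
  then show "isCont H w" using Hw by simp
  show "w0 < w" "w < w + 1" using assms by simp_all
qed

lemma smooth_on_set_H: "smooth_on_set {w0<..} H"
proof (rule smooth_on_set_inverse_function[OF open_greaterThan open_greaterThan _ _ smooth_on_set_Psi])
  fix w assume "w \<in> {w0<..}"
  then show "H w \<in> {s0 - 1<..}" "(H has_real_derivative inverse (deriv Psi (H w))) (at w)"
    using Psi_H(1)[of w] H_has_real_derivative[of w] by simp_all
next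
  fix s assume "s \<in> {s0 - 1<..}"
  then have "deriv Psi s \<ge> \<alpha>/2" using beyond_s0[of s] by simp
  then show "deriv Psi s > 0" using alpha_gt_1 by simp
qed

lemma H_tendsto_at_top: "filterlim H at_top at_top"
  unfolding filterlim_at_top
proof
  fix Z
  define S where "S = max Z (s0 + 1)"
  have S: "S > s0" unfolding S_def by simp
  show "\<forall>\<^sub>F w in at_top. Z \<le> H w"
    using eventually_ge_at_top[of "Psi S"]
  proof eventually_elim
    case (elim w)
    have "w > w0" using Psi_strict_mono[OF _ S] elim unfolding w0_def by simp
    then have "\<not> H w < S" using Psi_H Psi_strict_mono[of "H w" S] elim by fastforce
    then show ?case unfolding S_def by simp
  qed
qed

lemma deriv_H_asymptotics: "(deriv H \<longlongrightarrow> inverse \<alpha>) at_top" "\<forall>n. derivs_vanish n (deriv H)"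
proof -
  have deriv_H: "\<forall>\<^sub>F w in at_top. deriv H w = R (H w)"
    using eventually_gt_at_top[of w0] by eventually_elim (simp add: R_def DERIV_imp_deriv[OF H_has_real_derivative])
  show "(deriv H \<longlongrightarrow> inverse \<alpha>) at_top"
    using tendsto_cong[OF deriv_H] filterlim_compose[OF R_asymptotics(2) H_tendsto_at_top] by simp
  show "\<forall>n. derivs_vanish n (deriv H)"
    using derivs_vanish_compose_ode[OF H_tendsto_at_top smooth_at_topI[OF smooth_on_set_H] R_asymptotics deriv_H
        R_asymptotics] derivs_vanish_cong[OF deriv_H[unfolded eq_commute[of "deriv H _"]]] by blast
qed

definition "sol_log \<Lambda> = H (ln (ln \<Lambda>))"
definition "sol \<Lambda> = exp (sol_log \<Lambda>)"
definition "r0 = exp (exp w0)"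

lemma r0_pos: "r0 > 0"
  unfolding r0_def by simp

lemma ln_gt_exp_w0: "\<Lambda> > r0 \<Longrightarrow> ln \<Lambda> > exp w0"
  using ln_less_cancel_iff[of r0 \<Lambda>] r0_pos unfolding r0_def by simp

lemma ln_ln_gt_w0: "\<Lambda> > r0 \<Longrightarrow> ln (ln \<Lambda>) > w0"
  by (rule less_ln_of_exp_less[OF ln_gt_exp_w0])

lemma Q_eq_exp_Psi: "s > s0 - 1 \<Longrightarrow> Q s = exp (Psi s)"
  unfolding Psi_def using beyond_s0 by simp

lemma sol_log_gt_s0: "\<Lambda> > r0 \<Longrightarrow> sol_log \<Lambda> > s0"
  unfolding sol_log_def using Psi_H(1) ln_ln_gt_w0 by blast

lemma Psi_sol_log: "\<Lambda> > r0 \<Longrightarrow> Psi (sol_log \<Lambda>) = ln (ln \<Lambda>)"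
  unfolding sol_log_def using Psi_H(2) ln_ln_gt_w0 by blast

lemma Q_sol_log:
  assumes "\<Lambda> > r0" shows "Q (sol_log \<Lambda>) = ln \<Lambda>"
proof -
  have "ln \<Lambda> > 0" using ln_gt_exp_w0[OF assms] exp_gt_zero[of w0] by linarith
  then show ?thesis
    using Q_eq_exp_Psi[of "sol_log \<Lambda>"] sol_log_gt_s0[OF assms] Psi_sol_log[OF assms] by simp
qed

lemma sol_log_unique: "s > s0 \<Longrightarrow> Q s = ln \<Lambda> \<Longrightarrow> s = sol_log \<Lambda>"
  unfolding sol_log_def using H_Psi[of s] by (simp add: Psi_def)

lemma r0_less_of_ln_gt: "x > 0 \<Longrightarrow> ln x > exp w0 \<Longrightarrow> x > r0"
  unfolding r0_def using exp_less_cancel_iff[of "exp w0" "ln x"] by simp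

lemma sol_log_dist_le:
  "\<Lambda> > r0 \<Longrightarrow> \<Lambda>' > r0 \<Longrightarrow> \<bar>sol_log \<Lambda>' - sol_log \<Lambda>\<bar> \<le> 2 / \<alpha> * \<bar>ln (ln \<Lambda>') - ln (ln \<Lambda>)\<bar>"
  using dist_le_Psi_dist[of "sol_log \<Lambda>'" "sol_log \<Lambda>"] sol_log_gt_s0[of \<Lambda>] sol_log_gt_s0[of \<Lambda>']
    Psi_sol_log[of \<Lambda>] Psi_sol_log[of \<Lambda>'] by simp

lemma sol_log_tendsto_at_top: "filterlim sol_log at_top at_top"
  unfolding sol_log_def[abs_def]
  by (rule filterlim_compose[OF H_tendsto_at_top filterlim_compose[OF ln_at_top ln_at_top]])

lemma smooth_on_set_exp_H_ln: "smooth_on_set {exp w0<..} (\<lambda>x. exp (H (ln x)))"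
proof (rule smooth_on_set_compose[OF _ smooth_on_set_compose[OF _ _ _ smooth_on_set_H] _ smooth_on_set_exp])
  show "smooth_on_set {exp w0<..} ln" by (rule smooth_on_set_subset[OF smooth_on_set_ln]) auto
  show "ln x \<in> {w0<..}" if "x \<in> {exp w0<..}" for x
    using that less_ln_of_exp_less by simp
qed auto

lemma smooth_on_set_sol: "smooth_on_set {r0<..} sol"
proof -
  have "smooth_on_set {r0<..} (\<lambda>\<Lambda>. exp (H (ln (ln \<Lambda>))))"
  proof (rule smooth_on_set_compose[OF _ _ _ smooth_on_set_exp_H_ln])
    show "smooth_on_set {r0<..} ln" by (rule smooth_on_set_subset[OF smooth_on_set_ln]) (use r0_pos in auto)
  qed (auto simp: ln_gt_exp_w0)
  then show ?thesis by (simp add: sol_def[abs_def] sol_log_def)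
qed

lemma SR_0_sol: "SR 0 sol"
proof (rule SR_I[OF smooth_on_set_sol])
  have "(\<lambda>u. ln (sol (exp u))) = (\<lambda>u. H (ln u))" by (simp add: sol_def sol_log_def)
  moreover have "derivs_vanish m (\<lambda>u. H (ln u))" for m
    by (rule derivs_vanish_compose_ln[OF smooth_at_topI[OF smooth_on_set_H] deriv_H_asymptotics])
  ultimately have "derivs_vanish (Suc m) (\<lambda>u. ln (sol (exp u)))" for m by simp
  then show "(deriv (\<lambda>u. ln (sol (exp u))) \<longlongrightarrow> 0) at_top"
    "\<forall>n. derivs_vanish n (deriv (\<lambda>u. ln (sol (exp u))))"
    unfolding derivs_vanish_Suc by blast+
qed (simp add: sol_def)

lemma SR_sol_exp: "SR (1 / \<alpha>) (\<lambda>u. sol (exp u))"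
proof (rule SR_I)
  show "smooth_on_set {exp w0<..} (\<lambda>u. sol (exp u))"
    using smooth_on_set_exp_H_ln by (simp add: sol_def[abs_def] sol_log_def)
  have "(\<lambda>u. ln (sol (exp (exp u)))) = H" by (simp add: sol_def sol_log_def)
  then show "(deriv (\<lambda>u. ln (sol (exp (exp u)))) \<longlongrightarrow> 1 / \<alpha>) at_top"
    "\<forall>n. derivs_vanish n (deriv (\<lambda>u. ln (sol (exp (exp u)))))"
    using deriv_H_asymptotics by (simp_all add: inverse_eq_divide)
qed (simp add: sol_def)

lemma deriv_sol_tendsto: "((\<lambda>\<Lambda>. deriv sol \<Lambda> * \<Lambda> * ln \<Lambda> / sol \<Lambda>) \<longlongrightarrow> 1 / \<alpha>) at_top"
proof -
  have eq: "deriv H (ln (ln \<Lambda>)) = deriv sol \<Lambda> * \<Lambda> * ln \<Lambda> / sol \<Lambda>" if "\<Lambda> > r0" for \<Lambda>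
  proof -
    have pos: "\<Lambda> > 0" "ln \<Lambda> > 0"
      using that r0_pos ln_gt_exp_w0[OF that] exp_gt_zero[of w0] by linarith+
    have "(H has_real_derivative deriv H (ln (ln \<Lambda>))) (at (ln (ln \<Lambda>)))"
      by (rule DERIV_deriv[OF smooth_on_set_imp_differentiable[OF smooth_on_set_H]]) (use ln_ln_gt_w0[OF that] in simp)
    then have "(sol has_real_derivative sol \<Lambda> * (deriv H (ln (ln \<Lambda>)) * (inverse (ln \<Lambda>) * inverse \<Lambda>))) (at \<Lambda>)"
      unfolding sol_def[abs_def] sol_log_def
      by (rule DERIV_chain2[OF DERIV_exp DERIV_chain2[OF _ DERIV_chain2[OF DERIV_ln DERIV_ln]]]) (use pos in auto)
    moreover have "sol \<Lambda> > 0" by (simp add: sol_def)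
    ultimately show ?thesis using pos by (simp add: DERIV_imp_deriv field_simps)
  qed
  have ev: "\<forall>\<^sub>F \<Lambda> in at_top. deriv H (ln (ln \<Lambda>)) = deriv sol \<Lambda> * \<Lambda> * ln \<Lambda> / sol \<Lambda>"
    using eventually_gt_at_top[of r0] by eventually_elim (rule eq)
  have "((\<lambda>\<Lambda>. deriv H (ln (ln \<Lambda>))) \<longlongrightarrow> 1 / \<alpha>) at_top"
    using filterlim_compose[OF deriv_H_asymptotics(1) filterlim_compose[OF ln_at_top ln_at_top]]
    by (simp add: inverse_eq_divide)
  then show ?thesis using tendsto_cong[OF ev] by simp
qed

lemma P_has_real_derivative:
  assumes "z > s0 - 1" shows "(P has_real_derivative exp (F z - z) * A z) (at z)"
proof -
  have "(P has_real_derivative exp (F z - z) * (deriv F z - 1) * deriv F z + deriv (deriv F) z * exp (F z - z)) (at z)"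
    unfolding P_def[abs_def]
    using smooth_on_set_imp_differentiable[OF smooth_on_set_F] smooth_on_set_imp_differentiable[OF smooth_on_set_deriv[OF smooth_on_set_F]] assms
    by (intro DERIV_mult DERIV_chain2[OF DERIV_exp] DERIV_diff DERIV_deriv DERIV_ident) auto
  then show ?thesis by (rule DERIV_cong) (simp add: A_def algebra_simps)
qed

lemma Q_has_real_derivative:
  assumes "z > s0 - 1" shows "(Q has_real_derivative exp (F z) * (A z + E z * deriv K z)) (at z)"
proof -
  have "(Q has_real_derivative exp (F z) * deriv F z * (deriv F z - 1) + (deriv (deriv F) z - 0) * exp (F z)
      + exp (K z) * deriv K z) (at z)"
    unfolding Q_def[abs_def]
    using smooth_on_set_imp_differentiable[OF smooth_on_set_F] smooth_on_set_imp_differentiable[OF smooth_on_set_deriv[OF smooth_on_set_F]]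
      smooth_on_set_imp_differentiable[OF smooth_on_set_K] assms
    by (intro DERIV_add DERIV_mult DERIV_chain2[OF DERIV_exp] DERIV_diff DERIV_deriv DERIV_const) auto
  moreover have "exp (K z) = exp (F z) * E z" unfolding E_def by (simp add: exp_diff)
  ultimately show ?thesis by (simp add: A_def algebra_simps)
qed

lemma P_Q_cauchy_mvt_less:
  assumes "s0 < x" "x < y"
  shows "\<exists>\<sigma>. x < \<sigma> \<and> \<sigma> < y \<and> P y - P x = (Q y - Q x) * (exp (- \<sigma>) * B \<sigma>)"
proof -
  have "\<exists>\<sigma>. x < \<sigma> \<and> \<sigma> < y \<and>
    (P y - P x) * (exp (F \<sigma>) * (A \<sigma> + E \<sigma> * deriv K \<sigma>)) = (Q y - Q x) * (exp (F \<sigma> - \<sigma>) * A \<sigma>)"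
  proof (rule GMVT'[OF assms(2), where f = P and g = Q])
    fix z assume "x \<le> z"
    then have "z > s0 - 1" using assms(1) by simp
    then show "isCont P z" "isCont Q z"
      using DERIV_isCont[OF P_has_real_derivative] DERIV_isCont[OF Q_has_real_derivative] by blast+
  next
    fix z assume "x < z"
    then have "z > s0 - 1" using assms(1) by simp
    then show "(P has_real_derivative exp (F z - z) * A z) (at z)"
      "(Q has_real_derivative exp (F z) * (A z + E z * deriv K z)) (at z)"
      using P_has_real_derivative Q_has_real_derivative by blast+
  qed
  then obtain \<sigma> where \<sigma>: "x < \<sigma>" "\<sigma> < y"
    "(P y - P x) * (exp (F \<sigma>) * (A \<sigma> + E \<sigma> * deriv K \<sigma>)) = (Q y - Q x) * (exp (F \<sigma> - \<sigma>) * A \<sigma>)"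
    by blast
  have pos: "A \<sigma> + E \<sigma> * deriv K \<sigma> > 0" using beyond_s0[of \<sigma>] \<sigma> assms by simp
  have "exp (F \<sigma> - \<sigma>) = exp (F \<sigma>) * exp (- \<sigma>)" by (simp add: exp_diff exp_minus field_simps)
  then have "exp (F \<sigma> - \<sigma>) * A \<sigma> = exp (F \<sigma>) * (A \<sigma> + E \<sigma> * deriv K \<sigma>) * (exp (- \<sigma>) * B \<sigma>)"
    unfolding B_def using pos by (simp add: field_simps)
  then show ?thesis using \<sigma> pos by (intro exI[of _ \<sigma>]) (simp add: mult.assoc[symmetric])
qed

lemma P_Q_cauchy_mvt:
  assumes "x > s0" "y > s0"
  obtains \<sigma> where "min x y \<le> \<sigma>" "\<sigma> \<le> max x y" "P y - P x = (Q y - Q x) * (exp (- \<sigma>) * B \<sigma>)"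
proof (cases x y rule: linorder_cases)
  case less
  then obtain \<sigma> where "x < \<sigma>" "\<sigma> < y" "P y - P x = (Q y - Q x) * (exp (- \<sigma>) * B \<sigma>)"
    using P_Q_cauchy_mvt_less[OF assms(1)] by blast
  then show ?thesis using that[of \<sigma>] by simp
next
  case equal
  then show ?thesis using that[of x] by simp
next
  case greater
  then obtain \<sigma> where "y < \<sigma>" "\<sigma> < x" "P x - P y = (Q x - Q y) * (exp (- \<sigma>) * B \<sigma>)"
    using P_Q_cauchy_mvt_less[OF assms(2)] by blast
  then show ?thesis using that[of \<sigma>] by (simp add: algebra_simps)
qed

lemma P_increment_approx:
  assumes "\<delta> > 0"
  shows "\<exists>\<eta>>0. \<exists>S. \<forall>s s'. S \<le> s \<longrightarrow> \<bar>s' - s\<bar> < \<eta> \<longrightarrow>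
    \<bar>exp s * (P s' - P s) - (Q s' - Q s)\<bar> \<le> \<delta> * \<bar>Q s' - Q s\<bar>"
proof -
  define \<epsilon> where "\<epsilon> = min 1 (\<delta> / 3)"
  have \<epsilon>: "\<epsilon> > 0" "\<epsilon> \<le> 1" "3 * \<epsilon> \<le> \<delta>" unfolding \<epsilon>_def using assms by auto
  obtain S1 where S1: "\<And>\<sigma>. \<sigma> \<ge> S1 \<Longrightarrow> \<bar>B \<sigma> - 1\<bar> < \<epsilon>"
    using tendstoD[OF B_tendsto_1 \<epsilon>(1)] unfolding eventually_at_top_linorder dist_real_def by blast
  have "\<exists>\<eta>>0. \<forall>x::real. dist x 0 < \<eta> \<longrightarrow> dist (exp x) (exp 0) < \<epsilon>"
    by (rule isCont_exp[of 0, unfolded continuous_at_eps_delta, rule_format, OF \<epsilon>(1)])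
  then obtain \<eta> where "\<eta> > 0" and exp_close: "\<forall>x::real. dist x 0 < \<eta> \<longrightarrow> dist (exp x) (exp 0) < \<epsilon>"
    by blast
  have \<eta>: "\<eta> > 0" "\<And>x. \<bar>x\<bar> < \<eta> \<Longrightarrow> \<bar>exp x - 1\<bar> < \<epsilon>"
    using \<open>\<eta> > 0\<close> exp_close by (simp_all add: dist_real_def)
  define S where "S = max S1 s0 + \<eta>"
  have "\<bar>exp s * (P s' - P s) - (Q s' - Q s)\<bar> \<le> \<delta> * \<bar>Q s' - Q s\<bar>" if s: "S \<le> s" "\<bar>s' - s\<bar> < \<eta>" for s s'
  proof -
    have "s > s0" "s' > s0" using s \<eta>(1) unfolding S_def by auto
    then obtain \<sigma> where \<sigma>: "min s s' \<le> \<sigma>" "\<sigma> \<le> max s s'" "P s' - P s = (Q s' - Q s) * (exp (- \<sigma>) * B \<sigma>)"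
      by (rule P_Q_cauchy_mvt)
    have "\<bar>s - \<sigma>\<bar> < \<eta>" "\<sigma> \<ge> S1" using s \<sigma>(1,2) unfolding S_def by auto
    then have "\<bar>exp (s - \<sigma>) * B \<sigma> - 1\<bar> \<le> \<delta>"
      using abs_mult_minus_one_le[OF \<eta>(2) S1 \<epsilon>(2)] \<epsilon>(3) by force
    then have "\<bar>Q s' - Q s\<bar> * \<bar>exp (s - \<sigma>) * B \<sigma> - 1\<bar> \<le> \<bar>Q s' - Q s\<bar> * \<delta>"
      by (rule mult_left_mono) simp
    moreover have "exp s * (P s' - P s) - (Q s' - Q s) = (Q s' - Q s) * (exp (s - \<sigma>) * B \<sigma> - 1)"
      unfolding \<sigma>(3) by (simp add: exp_diff exp_minus field_simps)
    ultimately show ?thesis by (simp add: abs_mult mult.commute)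
  qed
  then show ?thesis using \<eta>(1) by blast
qed

lemma Q_tendsto_at_top: "filterlim Q at_top at_top"
proof -
  have "\<forall>\<^sub>F s in at_top. exp (Psi s) = Q s"
    using eventually_gt_at_top[of "s0 - 1"] by eventually_elim (simp add: Q_eq_exp_Psi)
  then show ?thesis
    using filterlim_compose[OF exp_at_top Psi_asymptotics(4)] filterlim_cong by fastforce
qed

lemma diff_tendsto_0_of_Q_diff_tendsto:
  fixes u v :: "'a \<Rightarrow> real"
  assumes "filterlim u at_top G" "filterlim v at_top G" "((\<lambda>t. Q (u t) - Q (v t)) \<longlongrightarrow> c) G"
  shows "((\<lambda>t. u t - v t) \<longlongrightarrow> 0) G"
proof -
  have beyond: "\<forall>\<^sub>F t in G. u t > s0 \<and> v t > s0"
    using assms(1,2)[unfolded filterlim_at_top_dense, rule_format, of s0] by (rule eventually_conj)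
  define r where "r t = (Q (u t) - Q (v t)) / Q (u t)" for t
  have "(r \<longlongrightarrow> 0) G"
    unfolding r_def using filterlim_compose[OF Q_tendsto_at_top assms(1)]
    by (intro tendsto_divide_0[OF assms(3)] filterlim_at_top_imp_at_infinity)
  then have "((\<lambda>t. - ln (1 - r t)) \<longlongrightarrow> - ln (1 - 0)) G"
    by (intro tendsto_minus tendsto_ln tendsto_diff tendsto_const) simp_all
  moreover have ev: "\<forall>\<^sub>F t in G. - ln (1 - r t) = Psi (u t) - Psi (v t)"
    using beyond
  proof eventually_elim
    case (elim t)
    then have "Q (u t) > 0" "Q (v t) > 0" using beyond_s0 by auto
    moreover from this have "1 - r t = Q (v t) / Q (u t)" unfolding r_def by (simp add: field_simps)
    ultimately show ?case unfolding Psi_def by (simp add: ln_div)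
  qed
  ultimately have "((\<lambda>t. Psi (u t) - Psi (v t)) \<longlongrightarrow> 0) G"
    using tendsto_cong[OF ev] by simp
  then have "((\<lambda>t. 2 / \<alpha> * \<bar>Psi (u t) - Psi (v t)\<bar>) \<longlongrightarrow> 2 / \<alpha> * \<bar>0\<bar>) G"
    by (intro tendsto_mult tendsto_const tendsto_rabs)
  moreover have "\<forall>\<^sub>F t in G. norm (u t - v t) \<le> 2 / \<alpha> * \<bar>Psi (u t) - Psi (v t)\<bar>"
    using beyond
  proof eventually_elim
    case (elim t)
    then show ?case using dist_le_Psi_dist[of "u t" "v t"] by simp
  qed
  ultimately show ?thesis by (simp add: Lim_null_comparison)
qed

lemma increment_tendsto:
  fixes u v :: "'a \<Rightarrow> real"
  assumes u: "filterlim u at_top G" and v: "filterlim v at_top G"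
    and Q_diff: "((\<lambda>t. Q (u t) - Q (v t)) \<longlongrightarrow> c) G"
  shows "((\<lambda>t. exp (u t) * (P (u t) - P (v t))) \<longlongrightarrow> c) G"
    "((\<lambda>t. exp (v t) * (P (u t) - P (v t))) \<longlongrightarrow> c) G"
proof -
  have uv: "((\<lambda>t. u t - v t) \<longlongrightarrow> 0) G" by (rule diff_tendsto_0_of_Q_diff_tendsto[OF u v Q_diff])
  have "((\<lambda>t. exp (u t) * (P (u t) - P (v t)) - (Q (u t) - Q (v t))) \<longlongrightarrow> 0) G"
  proof (rule tendstoI)
    fix \<epsilon> :: real assume "\<epsilon> > 0"
    define \<delta> where "\<delta> = \<epsilon> / (\<bar>c\<bar> + 1)"
    have "\<delta> > 0" unfolding \<delta>_def using \<open>\<epsilon> > 0\<close> by simp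
    then obtain \<eta> S where "\<eta> > 0" and approx: "\<forall>s s'. S \<le> s \<longrightarrow> \<bar>s' - s\<bar> < \<eta> \<longrightarrow>
        \<bar>exp s * (P s' - P s) - (Q s' - Q s)\<bar> \<le> \<delta> * \<bar>Q s' - Q s\<bar>"
      using P_increment_approx by blast
    have "\<forall>\<^sub>F t in G. S \<le> u t" using u unfolding filterlim_at_top by blast
    moreover have "\<forall>\<^sub>F t in G. \<bar>v t - u t\<bar> < \<eta>"
      using tendstoD[OF uv \<open>\<eta> > 0\<close>] by eventually_elim (simp add: dist_real_def abs_minus_commute)
    moreover have "\<forall>\<^sub>F t in G. \<bar>Q (u t) - Q (v t)\<bar> < \<bar>c\<bar> + 1"
      using tendstoD[OF Q_diff zero_less_one] by eventually_elim (simp add: dist_real_def)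
    ultimately show "\<forall>\<^sub>F t in G. dist (exp (u t) * (P (u t) - P (v t)) - (Q (u t) - Q (v t))) 0 < \<epsilon>"
    proof eventually_elim
      case (elim t)
      have "\<bar>exp (u t) * (P (u t) - P (v t)) - (Q (u t) - Q (v t))\<bar> \<le> \<delta> * \<bar>Q (u t) - Q (v t)\<bar>"
        using approx[rule_format, of "u t" "v t"] elim by (simp add: abs_minus_commute algebra_simps)
      also have "\<dots> < \<delta> * (\<bar>c\<bar> + 1)" using elim \<open>\<delta> > 0\<close> by simp
      also have "\<dots> = \<epsilon>" unfolding \<delta>_def by simp
      finally show ?case by (simp add: dist_real_def)
    qed
  qed
  from tendsto_add[OF this Q_diff] show u_lim: "((\<lambda>t. exp (u t) * (P (u t) - P (v t))) \<longlongrightarrow> c) G"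
    by simp
  have "((\<lambda>t. v t - u t) \<longlongrightarrow> - 0) G" using tendsto_minus[OF uv] by simp
  then have "((\<lambda>t. exp (v t - u t) * (exp (u t) * (P (u t) - P (v t)))) \<longlongrightarrow> exp (- 0) * c) G"
    by (rule tendsto_mult[OF tendsto_exp u_lim])
  then show "((\<lambda>t. exp (v t) * (P (u t) - P (v t))) \<longlongrightarrow> c) G"
    by (simp add: exp_diff)
qed

lemma sol_scaling:
  assumes "\<delta> > 0"
  shows "\<forall>\<^sub>F \<Lambda> in at_top. \<forall>y. ln \<Lambda> powr - \<gamma> \<le> y \<and> y \<le> ln \<Lambda> powr \<gamma> \<longrightarrow>
    y * \<Lambda> > r0 \<and> \<bar>sol \<Lambda> * (P (sol_log (y * \<Lambda>)) - P (sol_log \<Lambda>)) - ln y\<bar> \<le> \<delta> * \<bar>ln y\<bar>"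
proof -
  obtain \<eta> S where "\<eta> > 0" and approx: "\<forall>s s'. S \<le> s \<longrightarrow> \<bar>s' - s\<bar> < \<eta> \<longrightarrow>
      \<bar>exp s * (P s' - P s) - (Q s' - Q s)\<bar> \<le> \<delta> * \<bar>Q s' - Q s\<bar>"
    using P_increment_approx[OF assms] by blast
  have "\<alpha> * \<eta> / 2 > 0" using \<open>\<eta> > 0\<close> alpha_gt_1 by simp
  have "\<forall>\<^sub>F \<Lambda> in at_top. S \<le> sol_log \<Lambda>" using sol_log_tendsto_at_top unfolding filterlim_at_top by blast
  moreover have "\<forall>\<^sub>F \<Lambda> in at_top. ln \<Lambda> > 2 * exp w0" using ln_at_top unfolding filterlim_at_top_dense by blast
  ultimately show ?thesis
    using eventually_gt_at_top[of r0] ln_ln_mult_close[OF \<open>\<alpha> * \<eta> / 2 > 0\<close>, of \<gamma>]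
  proof eventually_elim
    case (elim \<Lambda>)
    show ?case
    proof (intro allI impI)
      fix y assume y: "ln \<Lambda> powr - \<gamma> \<le> y \<and> y \<le> ln \<Lambda> powr \<gamma>"
      then have y0: "y > 0" and half: "ln (y * \<Lambda>) \<ge> ln \<Lambda> / 2"
        and close: "\<bar>ln (ln (y * \<Lambda>)) - ln (ln \<Lambda>)\<bar> < \<alpha> * \<eta> / 2"
        using elim(4) by blast+
      have "\<Lambda> > 0" using elim(3) r0_pos by linarith
      then have y\<Lambda>: "y * \<Lambda> > r0" using r0_less_of_ln_gt[of "y * \<Lambda>"] y0 half elim(2) by simp
      have "\<bar>sol_log (y * \<Lambda>) - sol_log \<Lambda>\<bar> \<le> 2 / \<alpha> * \<bar>ln (ln (y * \<Lambda>)) - ln (ln \<Lambda>)\<bar>"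
        by (rule sol_log_dist_le[OF elim(3) y\<Lambda>])
      also have "\<dots> < 2 / \<alpha> * (\<alpha> * \<eta> / 2)" using close alpha_gt_1 by (intro mult_strict_left_mono) auto
      also have "\<dots> = \<eta>" using alpha_gt_1 by simp
      finally have "\<bar>sol_log (y * \<Lambda>) - sol_log \<Lambda>\<bar> < \<eta>" .
      moreover have "Q (sol_log (y * \<Lambda>)) - Q (sol_log \<Lambda>) = ln y"
        unfolding Q_sol_log[OF elim(3)] Q_sol_log[OF y\<Lambda>] using y0 \<open>\<Lambda> > 0\<close> by (simp add: ln_mult)
      ultimately have "\<bar>exp (sol_log \<Lambda>) * (P (sol_log (y * \<Lambda>)) - P (sol_log \<Lambda>)) - ln y\<bar> \<le> \<delta> * \<bar>ln y\<bar>"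
        using approx elim(1) by metis
      then show "y * \<Lambda> > r0 \<and> \<bar>sol \<Lambda> * (P (sol_log (y * \<Lambda>)) - P (sol_log \<Lambda>)) - ln y\<bar> \<le> \<delta> * \<bar>ln y\<bar>"
        using y\<Lambda> unfolding sol_def by simp
    qed
  qed
qed

end

subsection \<open>Solutions of the equation\<close>

locale SR_equation =
  fixes f k :: "real \<Rightarrow> real" and \<alpha> b :: real
  assumes indices: "\<alpha> > 1" "b < \<alpha>" and f_SR: "SR \<alpha> f" and k_SR: "SR b k"
begin

lemma link_threshold_exists:
  "\<exists>T. \<forall>u>T. f (exp u) > 0 \<and> k (exp u) > 0 \<and>
     deriv f (exp u) = exp (ln (f (exp u)) - u) * deriv (\<lambda>u. ln (f (exp u))) u"
proof -
  obtain zf where zf: "zf \<ge> 1" "\<And>x. x > zf \<Longrightarrow> f x > 0"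
    "\<And>u. u > ln zf \<Longrightarrow> deriv f (exp u) = exp (ln (f (exp u)) - u) * deriv (\<lambda>u. ln (f (exp u))) u"
    using SR_log_coordinates[OF f_SR] by metis
  obtain zk where zk: "zk \<ge> 1" "\<And>x. x > zk \<Longrightarrow> k x > 0"
    using SR_log_coordinates[OF k_SR] by metis
  have "exp u > z" if "u > ln z" "z \<ge> 1" for u z :: real
    using that by (metis exp_less_cancel_iff exp_ln less_le_trans zero_less_one)
  then show ?thesis using zf zk by (intro exI[of _ "max (ln zf) (ln zk)"]) auto
qed

definition "T_link = (SOME T. \<forall>u>T. f (exp u) > 0 \<and> k (exp u) > 0 \<and>
   deriv f (exp u) = exp (ln (f (exp u)) - u) * deriv (\<lambda>u. ln (f (exp u))) u)"

lemma link:
  assumes "u > T_link"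
  shows "f (exp u) > 0" "k (exp u) > 0"
    "deriv f (exp u) = exp (ln (f (exp u)) - u) * deriv (\<lambda>u. ln (f (exp u))) u"
  using someI_ex[OF link_threshold_exists] assms unfolding T_link_def[symmetric] by blast+

sublocale log_equation "\<lambda>u. ln (f (exp u))" "\<lambda>u. ln (k (exp u))" \<alpha> b T_link
proof -
  obtain zf where "smooth_at_top (\<lambda>u. ln (f (exp u)))" "(deriv (\<lambda>u. ln (f (exp u))) \<longlongrightarrow> \<alpha>) at_top"
    "\<forall>n. derivs_vanish n (deriv (\<lambda>u. ln (f (exp u))))"
    using SR_log_coordinates[OF f_SR] by metis
  moreover obtain zk where "smooth_at_top (\<lambda>u. ln (k (exp u)))" "(deriv (\<lambda>u. ln (k (exp u))) \<longlongrightarrow> b) at_top"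
    "\<forall>n. derivs_vanish n (deriv (\<lambda>u. ln (k (exp u))))"
    using SR_log_coordinates[OF k_SR] by metis
  ultimately show "log_equation (\<lambda>u. ln (f (exp u))) (\<lambda>u. ln (k (exp u))) \<alpha> b"
    using indices by unfold_locales
qed

lemma equation_log_coordinates:
  assumes "u > T_link"
  shows "exp u * deriv f (exp u) - f (exp u) + k (exp u) = Q u" "deriv f (exp u) = P u"
proof -
  show P: "deriv f (exp u) = P u" unfolding P_def using link[OF assms] by simp
  have "exp u * P u = f (exp u) * deriv (\<lambda>u. ln (f (exp u))) u"
    unfolding P_def using link(1)[OF assms] by (simp add: exp_diff)
  then show "exp u * deriv f (exp u) - f (exp u) + k (exp u) = Q u"
    unfolding P Q_def using link(1,2)[OF assms] by (simp add: algebra_simps)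
qed

lemma sol_eq_iff:
  assumes "x > exp s0" shows "sol_eq f k \<Lambda> x \<longleftrightarrow> Q (ln x) = ln \<Lambda>"
proof -
  have "x > 0" "ln x > T_link"
    using assms less_ln_of_exp_less[OF assms] s0_ge_T0 exp_gt_zero[of s0] by linarith+
  then show ?thesis unfolding sol_eq_def using equation_log_coordinates(1)[of "ln x"] by simp
qed

lemma is_sol_sol: "is_sol f k r0 (exp s0) sol"
  unfolding is_sol_def
proof (intro allI impI)
  fix \<Lambda> assume \<Lambda>: "\<Lambda> > r0"
  have sol: "sol \<Lambda> > exp s0" unfolding sol_def using sol_log_gt_s0[OF \<Lambda>] by simp
  moreover have "sol_eq f k \<Lambda> (sol \<Lambda>)" using sol_eq_iff[OF sol] Q_sol_log[OF \<Lambda>] by (simp add: sol_def)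
  moreover have "x = sol \<Lambda>" if x: "x > exp s0" "sol_eq f k \<Lambda> x" for x
  proof -
    have "ln x = sol_log \<Lambda>"
      using sol_log_unique less_ln_of_exp_less[OF x(1)] sol_eq_iff[OF x(1)] x(2) by blast
    then show "x = sol \<Lambda>" using x(1) exp_gt_zero[of s0] unfolding sol_def by (metis exp_ln less_trans)
  qed
  ultimately show "exp s0 < sol \<Lambda> \<and> sol_eq f k \<Lambda> (sol \<Lambda>) \<and> (\<forall>x>exp s0. sol_eq f k \<Lambda> x \<longrightarrow> x = sol \<Lambda>)"
    by blast
qed

lemma is_sol_eventually_eq:
  assumes "is_sol f k r x g" shows "\<forall>\<^sub>F \<Lambda> in at_top. g \<Lambda> = sol \<Lambda>"
proof -
  have "\<forall>\<^sub>F \<Lambda> in at_top. sol \<Lambda> > x"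
    using filterlim_compose[OF exp_at_top sol_log_tendsto_at_top]
    unfolding sol_def[abs_def] filterlim_at_top_dense by blast
  then show ?thesis
    using eventually_gt_at_top[of "max r r0"]
  proof eventually_elim
    case (elim \<Lambda>)
    then show ?case using assms is_sol_sol unfolding is_sol_def by force
  qed
qed

lemma sol_limits:
  "((\<lambda>\<Lambda>. f (sol \<Lambda>) / ln \<Lambda>) \<longlongrightarrow> 1 / (\<alpha> - 1)) at_top"
  "((\<lambda>\<Lambda>. sol \<Lambda> * deriv f (sol \<Lambda>) / ln \<Lambda>) \<longlongrightarrow> \<alpha> / (\<alpha> - 1)) at_top"
  "((\<lambda>\<Lambda>. (sol \<Lambda> * deriv f (sol \<Lambda>) - f (sol \<Lambda>)) / ln \<Lambda>) \<longlongrightarrow> 1) at_top"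
proof -
  define F' where "F' s = deriv (\<lambda>u. ln (f (exp u))) s" for s
  have ev: "\<forall>\<^sub>F \<Lambda> in at_top. f (sol \<Lambda>) / ln \<Lambda> = 1 / W (sol_log \<Lambda>) \<and>
      sol \<Lambda> * deriv f (sol \<Lambda>) / ln \<Lambda> = F' (sol_log \<Lambda>) / W (sol_log \<Lambda>) \<and>
      (sol \<Lambda> * deriv f (sol \<Lambda>) - f (sol \<Lambda>)) / ln \<Lambda> = (F' (sol_log \<Lambda>) - 1) / W (sol_log \<Lambda>)"
    using eventually_gt_at_top[of r0]
  proof eventually_elim
    case (elim \<Lambda>)
    define s where "s = sol_log \<Lambda>"
    have s: "s > T_link" "s > s0 - 1" using sol_log_gt_s0[OF elim] s0_ge_T0 unfolding s_def by auto
    have f: "f (sol \<Lambda>) = exp (ln (f (exp s)))" using link(1)[OF s(1)] by (simp add: sol_def s_def)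
    have "sol \<Lambda> * deriv f (sol \<Lambda>) = f (sol \<Lambda>) * F' s"
      using equation_log_coordinates(2)[OF s(1)] f unfolding sol_def s_def P_def F'_def
      by (simp add: exp_diff)
    moreover have "ln \<Lambda> = f (sol \<Lambda>) * W s"
      using Q_sol_log[OF elim] f unfolding Q_eq_exp_F_W s_def by simp
    moreover have "W s > 0" "f (sol \<Lambda>) > 0"
      using beyond_s0[OF s(2)] f unfolding Q_eq_exp_F_W by (auto simp: zero_less_mult_iff)
    ultimately show ?case unfolding s_def[symmetric] by (simp add: field_simps)
  qed
  have W: "((\<lambda>\<Lambda>. W (sol_log \<Lambda>)) \<longlongrightarrow> \<alpha> - 1) at_top"
    and F': "((\<lambda>\<Lambda>. F' (sol_log \<Lambda>)) \<longlongrightarrow> \<alpha>) at_top"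
    using filterlim_compose[OF W_asymptotics(2) sol_log_tendsto_at_top]
      filterlim_compose[OF deriv_F_tendsto sol_log_tendsto_at_top] unfolding F'_def by auto
  have "\<alpha> - 1 \<noteq> 0" using indices by simp
  have lim: "((\<lambda>\<Lambda>. 1 / W (sol_log \<Lambda>)) \<longlongrightarrow> 1 / (\<alpha> - 1)) at_top"
    "((\<lambda>\<Lambda>. F' (sol_log \<Lambda>) / W (sol_log \<Lambda>)) \<longlongrightarrow> \<alpha> / (\<alpha> - 1)) at_top"
    "((\<lambda>\<Lambda>. (F' (sol_log \<Lambda>) - 1) / W (sol_log \<Lambda>)) \<longlongrightarrow> (\<alpha> - 1) / (\<alpha> - 1)) at_top"
    by (rule tendsto_divide[OF tendsto_const W \<open>\<alpha> - 1 \<noteq> 0\<close>] tendsto_divide[OF F' W \<open>\<alpha> - 1 \<noteq> 0\<close>]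
        tendsto_divide[OF tendsto_diff[OF F' tendsto_const] W \<open>\<alpha> - 1 \<noteq> 0\<close>])+
  have "\<forall>\<^sub>F \<Lambda> in at_top. f (sol \<Lambda>) / ln \<Lambda> = 1 / W (sol_log \<Lambda>)"
    "\<forall>\<^sub>F \<Lambda> in at_top. sol \<Lambda> * deriv f (sol \<Lambda>) / ln \<Lambda> = F' (sol_log \<Lambda>) / W (sol_log \<Lambda>)"
    "\<forall>\<^sub>F \<Lambda> in at_top. (sol \<Lambda> * deriv f (sol \<Lambda>) - f (sol \<Lambda>)) / ln \<Lambda> = (F' (sol_log \<Lambda>) - 1) / W (sol_log \<Lambda>)"
    using ev by (auto elim: eventually_mono)
  from this[THEN tendsto_cong] lim \<open>\<alpha> - 1 \<noteq> 0\<close>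
  show "((\<lambda>\<Lambda>. f (sol \<Lambda>) / ln \<Lambda>) \<longlongrightarrow> 1 / (\<alpha> - 1)) at_top"
    "((\<lambda>\<Lambda>. sol \<Lambda> * deriv f (sol \<Lambda>) / ln \<Lambda>) \<longlongrightarrow> \<alpha> / (\<alpha> - 1)) at_top"
    "((\<lambda>\<Lambda>. (sol \<Lambda> * deriv f (sol \<Lambda>) - f (sol \<Lambda>)) / ln \<Lambda>) \<longlongrightarrow> 1) at_top"
    by simp_all
qed

lemma sol_scaling_deriv_f:
  assumes "\<delta> > 0"
  shows "\<exists>z>r0. \<forall>\<Lambda>>z. \<forall>y. ln \<Lambda> powr - \<gamma> \<le> y \<and> y \<le> ln \<Lambda> powr \<gamma> \<longrightarrow>
    \<bar>sol \<Lambda> * (deriv f (sol (y * \<Lambda>)) - deriv f (sol \<Lambda>)) - ln y\<bar> \<le> \<delta> * \<bar>ln y\<bar>"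
proof -
  have deriv_f_sol: "deriv f (sol \<Lambda>) = P (sol_log \<Lambda>)" if "\<Lambda> > r0" for \<Lambda>
    using equation_log_coordinates(2)[of "sol_log \<Lambda>"] sol_log_gt_s0[OF that] s0_ge_T0 by (simp add: sol_def)
  obtain z where "\<forall>\<Lambda>\<ge>z. \<forall>y. ln \<Lambda> powr - \<gamma> \<le> y \<and> y \<le> ln \<Lambda> powr \<gamma> \<longrightarrow>
    y * \<Lambda> > r0 \<and> \<bar>sol \<Lambda> * (P (sol_log (y * \<Lambda>)) - P (sol_log \<Lambda>)) - ln y\<bar> \<le> \<delta> * \<bar>ln y\<bar>"
    using sol_scaling[OF assms] unfolding eventually_at_top_linorder by blast
  then show ?thesis
    using deriv_f_sol by (intro exI[of _ "max z r0 + 1"]) auto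
qed

end

lemma solutions_difference_tendsto:
  assumes "SR_equation f k0 \<alpha> b" "SR_equation f k1 \<alpha> b" and c: "((\<lambda>\<Lambda>. k1 \<Lambda> - k0 \<Lambda>) \<longlongrightarrow> c) at_top"
    and g0: "is_sol f k0 r0 x0 g0" and g1: "is_sol f k1 r1 x1 g1"
  shows "((\<lambda>\<Lambda>. g0 \<Lambda> * (deriv f (g0 \<Lambda>) - deriv f (g1 \<Lambda>))) \<longlongrightarrow> c) at_top"
    "((\<lambda>\<Lambda>. g1 \<Lambda> * (deriv f (g0 \<Lambda>) - deriv f (g1 \<Lambda>))) \<longlongrightarrow> c) at_top"
proof -
  interpret E0: SR_equation f k0 \<alpha> b by fact
  interpret E1: SR_equation f k1 \<alpha> b by fact
  define u v where "u = E0.sol_log" and "v = E1.sol_log"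
  have u: "filterlim u at_top at_top" and v: "filterlim v at_top at_top"
    unfolding u_def v_def by (rule E0.sol_log_tendsto_at_top E1.sol_log_tendsto_at_top)+
  have ev: "\<forall>\<^sub>F \<Lambda> in at_top. g0 \<Lambda> = exp (u \<Lambda>) \<and> g1 \<Lambda> = exp (v \<Lambda>) \<and>
      deriv f (g0 \<Lambda>) = E0.P (u \<Lambda>) \<and> deriv f (g1 \<Lambda>) = E0.P (v \<Lambda>) \<and>
      E0.Q (u \<Lambda>) - E0.Q (v \<Lambda>) = k1 (exp (v \<Lambda>)) - k0 (exp (v \<Lambda>))"
    using E0.is_sol_eventually_eq[OF g0] E1.is_sol_eventually_eq[OF g1]
      eventually_gt_at_top[of "max E0.r0 E1.r0"] v[unfolded filterlim_at_top_dense, rule_format, of E0.T_link]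
  proof eventually_elim
    case (elim \<Lambda>)
    have "u \<Lambda> > E0.T_link" "v \<Lambda> > E1.T_link"
      using E0.sol_log_gt_s0 E0.s0_ge_T0 E1.sol_log_gt_s0 E1.s0_ge_T0 elim(3) unfolding u_def v_def by force+
    then have "exp (v \<Lambda>) * deriv f (exp (v \<Lambda>)) - f (exp (v \<Lambda>)) + k0 (exp (v \<Lambda>)) = E0.Q (v \<Lambda>)"
      "exp (v \<Lambda>) * deriv f (exp (v \<Lambda>)) - f (exp (v \<Lambda>)) + k1 (exp (v \<Lambda>)) = E1.Q (v \<Lambda>)"
      "deriv f (exp (u \<Lambda>)) = E0.P (u \<Lambda>)" "deriv f (exp (v \<Lambda>)) = E0.P (v \<Lambda>)"
      using E0.equation_log_coordinates E1.equation_log_coordinates elim(4) by auto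
    moreover have "E0.Q (u \<Lambda>) = ln \<Lambda>" "E1.Q (v \<Lambda>) = ln \<Lambda>"
      using E0.Q_sol_log E1.Q_sol_log elim(3) unfolding u_def v_def by auto
    ultimately show ?case using elim(1,2) unfolding u_def v_def E0.sol_def E1.sol_def by auto
  qed
  have "((\<lambda>\<Lambda>. k1 (exp (v \<Lambda>)) - k0 (exp (v \<Lambda>))) \<longlongrightarrow> c) at_top"
    by (rule filterlim_compose[OF c filterlim_compose[OF exp_at_top v]])
  moreover have "\<forall>\<^sub>F \<Lambda> in at_top. k1 (exp (v \<Lambda>)) - k0 (exp (v \<Lambda>)) = E0.Q (u \<Lambda>) - E0.Q (v \<Lambda>)"
    using ev by (auto elim: eventually_mono)
  ultimately have "((\<lambda>\<Lambda>. E0.Q (u \<Lambda>) - E0.Q (v \<Lambda>)) \<longlongrightarrow> c) at_top"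
    by (rule tendsto_cong[THEN iffD1, rotated])
  note lim = E0.increment_tendsto[OF u v this]
  have "\<forall>\<^sub>F \<Lambda> in at_top. exp (u \<Lambda>) * (E0.P (u \<Lambda>) - E0.P (v \<Lambda>)) = g0 \<Lambda> * (deriv f (g0 \<Lambda>) - deriv f (g1 \<Lambda>))"
    "\<forall>\<^sub>F \<Lambda> in at_top. exp (v \<Lambda>) * (E0.P (u \<Lambda>) - E0.P (v \<Lambda>)) = g1 \<Lambda> * (deriv f (g0 \<Lambda>) - deriv f (g1 \<Lambda>))"
    using ev by (auto elim: eventually_mono)
  from lim this[THEN tendsto_cong] show "((\<lambda>\<Lambda>. g0 \<Lambda> * (deriv f (g0 \<Lambda>) - deriv f (g1 \<Lambda>))) \<longlongrightarrow> c) at_top"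
    "((\<lambda>\<Lambda>. g1 \<Lambda> * (deriv f (g0 \<Lambda>) - deriv f (g1 \<Lambda>))) \<longlongrightarrow> c) at_top"
    by simp_all
qed

theorem lemma2p2:
  fixes \<alpha> b :: real and f :: "real \<Rightarrow> real"
  assumes "\<alpha> > 1" and "SR \<alpha> f" and "b < \<alpha>"
  shows "(\<forall>k. SR b k \<longrightarrow>
      (\<exists>ro xo g. ro > 0 \<and> is_sol f k ro xo g \<and> SR 0 g \<and> SR (1 / \<alpha>) (\<lambda>u. g (exp u)) \<and>
        (\<forall>\<gamma>>0. \<forall>\<delta>>0. \<exists>z>ro. \<forall>\<Lambda>>z. \<forall>y.
            ln \<Lambda> powr (-\<gamma>) \<le> y \<and> y \<le> ln \<Lambda> powr \<gamma> \<longrightarrow>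
            \<bar>g \<Lambda> * (deriv f (g (y * \<Lambda>)) - deriv f (g \<Lambda>)) - ln y\<bar> \<le> \<delta> * \<bar>ln y\<bar>) \<and>
        ((\<lambda>\<Lambda>. deriv g \<Lambda> * \<Lambda> * ln \<Lambda> / g \<Lambda>) \<longlongrightarrow> 1 / \<alpha>) at_top \<and>
        ((\<lambda>\<Lambda>. f (g \<Lambda>) / ln \<Lambda>) \<longlongrightarrow> 1 / (\<alpha> - 1)) at_top \<and>
        ((\<lambda>\<Lambda>. g \<Lambda> * deriv f (g \<Lambda>) / ln \<Lambda>) \<longlongrightarrow> \<alpha> / (\<alpha> - 1)) at_top \<and>
        ((\<lambda>\<Lambda>. (g \<Lambda> * deriv f (g \<Lambda>) - f (g \<Lambda>)) / ln \<Lambda>) \<longlongrightarrow> 1) at_top))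
    \<and>
    (\<forall>k0 k1 c g0 g1 r0 r1 x0 x1. SR b k0 \<and> SR b k1 \<and>
        ((\<lambda>\<Lambda>. k1 \<Lambda> - k0 \<Lambda>) \<longlongrightarrow> c) at_top \<and>
        is_sol f k0 r0 x0 g0 \<and> is_sol f k1 r1 x1 g1 \<longrightarrow>
        ((\<lambda>\<Lambda>. g0 \<Lambda> * (deriv f (g0 \<Lambda>) - deriv f (g1 \<Lambda>))) \<longlongrightarrow> c) at_top \<and>
        ((\<lambda>\<Lambda>. g1 \<Lambda> * (deriv f (g0 \<Lambda>) - deriv f (g1 \<Lambda>))) \<longlongrightarrow> c) at_top)"
  apply (intro conjI allI impI; (elim conjE)?)
  subgoal premises k for k
  proof -
    interpret SR_equation f k \<alpha> b using assms k by unfold_locales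
    show ?thesis
      by (rule exI[of _ r0], rule exI[of _ "exp s0"], rule exI[of _ sol],
          intro conjI allI impI r0_pos is_sol_sol SR_0_sol SR_sol_exp sol_scaling_deriv_f deriv_sol_tendsto
          sol_limits)
  qed
  subgoal premises prems
    by (rule solutions_difference_tendsto(1)[OF SR_equation.intro[OF assms(1,3,2) prems(1)]
          SR_equation.intro[OF assms(1,3,2) prems(2)] prems(3-5)])
  subgoal premises prems
    by (rule solutions_difference_tendsto(2)[OF SR_equation.intro[OF assms(1,3,2) prems(1)]
          SR_equation.intro[OF assms(1,3,2) prems(2)] prems(3-5)])
  done

end
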